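(* Let $(M,\varphi,\xi,\eta,g,\varepsilon)$ be a $3$-dimensional $(\varepsilon)$-para Sasakian manifold with scalar curvature $r$, and let $\mathcal{T}$ be its $\mathcal{T}$-curvature tensor with constants $a_0,\dots,a_7$. Then for all vector fields $X,Y,Z$, \begin{align*} \mathcal{T}(X,Y)Z &=\left( \left( \tfrac{r}{2}+\varepsilon \right) \left(a_{0}+a_{1}+a_{4}\right) +a_{7}r+\varepsilon a_{0}\right) g(Y,Z)X -\left( \left( \tfrac{r}{2}+\varepsilon \right) \left(a_{0}-a_{2}-a_{5}\right) +a_{7}r+\varepsilon a_{0}\right) g(X,Z)Y \\ &\quad +\left( \tfrac{r}{2}+\varepsilon \right) \left( a_{3}+a_{6}\right)g(X,Y)Z-\left( \tfrac{\varepsilon r}{2}+3\right) a_{3}\eta (X)\eta (Y)Z -\left( \tfrac{\varepsilon r}{2}+3\right) \left( a_{0}+a_{1}\right) \eta(Y)\eta (Z)X\\ &\quad +\left( \tfrac{\varepsilon r}{2}+3\right) \left(a_{0}-a_{2}\right) \eta (X)\eta (Z)Y +\left( \tfrac{r}{2}+3\varepsilon \right) \left( a_{0}-a_{5}\right)g(X,Z)\eta (Y)\xi -\left( \tfrac{r}{2}+3\varepsilon \right) a_{6}g(X,Y)\eta(Z)\xi \\ &\quad -\left( \tfrac{r}{2}+3\varepsilon \right) \left( a_{0}+a_{4}\right)g(Y,Z)\eta (X)\xi . \end{align*}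
   Context: An $(\varepsilon)$-almost paracontact metric manifold is a manifold $M$ with a $(1,1)$-tensor field $\varphi$, a vector field $\xi$, a $1$-form $\eta$ and a semi-Riemannian metric $g$ such that $\varphi^2=I-\eta\otimes\xi$, $\eta(\xi)=1$, $\varphi\xi=0$, $\eta\circ\varphi=0$, and $g(\varphi X,\varphi Y)=g(X,Y)-\varepsilon\eta(X)\eta(Y)$ for all $X,Y$, where $\varepsilon=\pm1$ (equivalently $g(X,\varphi Y)=g(\varphi X,Y)$ and $g(X,\xi)=\varepsilon\eta(X)$). It is an $(\varepsilon)$-para Sasakian manifold if $(\nabla_X\varphi)Y=-g(\varphi X,\varphi Y)\xi-\varepsilon\eta(Y)\varphi^2X$ for all $X,Y$, where $\nabla$ is the Levi-Civita connection of $g$. For a semi-Riemannian manifold with curvature tensor $R$, Ricci tensor $S$, Ricci operator $Q$ and scalar curvature $r$, the $\mathcal{T}$-curvature tensor with constants $a_0,\dots,a_7$ is $\mathcal{T}(X,Y)Z=a_0R(X,Y)Z+a_1S(Y,Z)X+a_2S(X,Z)Y+a_3S(X,Y)Z+a_4g(Y,Z)QX+a_5g(X,Z)QY+a_6g(X,Y)QZ+a_7r(g(Y,Z)X-g(X,Z)Y)$. *)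

theory Defs
  imports "HOL-Analysis.Analysis"
begin

text \<open>Local (coordinate) model of a 3-dimensional semi-Riemannian manifold:
  an open set U of real^3.  Vector fields are maps real^3 => real^3,
  (1,1)-tensors are matrix-valued maps, 1-forms are covector-valued maps
  (eta(X) = eta x \<bullet> X x), the metric is a matrix-valued map.\<close>

type_synonym vf = "real^3 \<Rightarrow> real^3"

definition pd :: "3 \<Rightarrow> (real^3 \<Rightarrow> 'b::real_normed_vector) \<Rightarrow> real^3 \<Rightarrow> 'b" where
  "pd i f x = frechet_derivative f (at x) (axis i 1)"

fun iter_pd :: "3 list \<Rightarrow> (real^3 \<Rightarrow> 'b::real_normed_vector) \<Rightarrow> real^3 \<Rightarrow> 'b" where
  "iter_pd [] f = f"
| "iter_pd (i # is) f = pd i (iter_pd is f)"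

definition smooth3_on :: "(real^3) set \<Rightarrow> (real^3 \<Rightarrow> 'b::real_normed_vector) \<Rightarrow> bool" where
  "smooth3_on U f \<longleftrightarrow> (\<forall>is. \<forall>x\<in>U. iter_pd is f differentiable (at x))"

definition ginner :: "(real^3 \<Rightarrow> real^3^3) \<Rightarrow> vf \<Rightarrow> vf \<Rightarrow> real^3 \<Rightarrow> real" where
  "ginner gm X Y x = X x \<bullet> (gm x *v Y x)"

definition christoffel :: "(real^3 \<Rightarrow> real^3^3) \<Rightarrow> real^3 \<Rightarrow> 3 \<Rightarrow> 3 \<Rightarrow> 3 \<Rightarrow> real" where
  "christoffel gm x k i j =
     (1/2) * (\<Sum>l\<in>UNIV. matrix_inv (gm x) $ k $ l *
        (pd i (\<lambda>y. gm y $ j $ l) x + pd j (\<lambda>y. gm y $ i $ l) x - pd l (\<lambda>y. gm y $ i $ j) x))"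

definition nabla :: "(real^3 \<Rightarrow> real^3^3) \<Rightarrow> vf \<Rightarrow> vf \<Rightarrow> vf" where
  "nabla gm X Y x = frechet_derivative Y (at x) (X x)
     + (\<chi> k. \<Sum>i\<in>UNIV. \<Sum>j\<in>UNIV. christoffel gm x k i j * X x $ i * Y x $ j)"

definition lie :: "vf \<Rightarrow> vf \<Rightarrow> vf" where
  "lie X Y x = frechet_derivative Y (at x) (X x) - frechet_derivative X (at x) (Y x)"

definition curv :: "(real^3 \<Rightarrow> real^3^3) \<Rightarrow> vf \<Rightarrow> vf \<Rightarrow> vf \<Rightarrow> vf" where
  "curv gm X Y Z x = nabla gm X (nabla gm Y Z) x - nabla gm Y (nabla gm X Z) x - nabla gm (lie X Y) Z x"

definition cf :: "real^3 \<Rightarrow> vf" where "cf v = (\<lambda>_. v)"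

definition ricci :: "(real^3 \<Rightarrow> real^3^3) \<Rightarrow> vf \<Rightarrow> vf \<Rightarrow> real^3 \<Rightarrow> real" where
  "ricci gm Y Z x = (\<Sum>i\<in>UNIV. curv gm (cf (axis i 1)) Y Z x $ i)"

definition ricci_mat :: "(real^3 \<Rightarrow> real^3^3) \<Rightarrow> real^3 \<Rightarrow> real^3^3" where
  "ricci_mat gm x = (\<chi> i j. ricci gm (cf (axis i 1)) (cf (axis j 1)) x)"

definition ricci_op :: "(real^3 \<Rightarrow> real^3^3) \<Rightarrow> vf \<Rightarrow> vf" where
  "ricci_op gm X x = (matrix_inv (gm x) ** ricci_mat gm x) *v X x"

definition scal :: "(real^3 \<Rightarrow> real^3^3) \<Rightarrow> real^3 \<Rightarrow> real" where
  "scal gm x = trace (matrix_inv (gm x) ** ricci_mat gm x)"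

definition Tcurv :: "(real^3 \<Rightarrow> real^3^3) \<Rightarrow> (nat \<Rightarrow> real) \<Rightarrow> vf \<Rightarrow> vf \<Rightarrow> vf \<Rightarrow> vf" where
  "Tcurv gm a X Y Z x =
      a 0 *\<^sub>R curv gm X Y Z x
    + (a 1 * ricci gm Y Z x) *\<^sub>R X x
    + (a 2 * ricci gm X Z x) *\<^sub>R Y x
    + (a 3 * ricci gm X Y x) *\<^sub>R Z x
    + (a 4 * ginner gm Y Z x) *\<^sub>R ricci_op gm X x
    + (a 5 * ginner gm X Z x) *\<^sub>R ricci_op gm Y x
    + (a 6 * ginner gm X Y x) *\<^sub>R ricci_op gm Z x
    + (a 7 * scal gm x) *\<^sub>R ((ginner gm Y Z x) *\<^sub>R X x - (ginner gm X Z x) *\<^sub>R Y x)"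

definition smooth_vf :: "(real^3) set \<Rightarrow> vf \<Rightarrow> bool" where
  "smooth_vf U X \<longleftrightarrow> smooth3_on U X"

definition eps_almost_paracontact ::
  "(real^3) set \<Rightarrow> (real^3 \<Rightarrow> real^3^3) \<Rightarrow> vf \<Rightarrow> (real^3 \<Rightarrow> real^3) \<Rightarrow> (real^3 \<Rightarrow> real^3^3) \<Rightarrow> real \<Rightarrow> bool" where
  "eps_almost_paracontact U \<phi> \<xi> \<eta> gm \<epsilon> \<longleftrightarrow>
     open U \<and> (\<epsilon> = 1 \<or> \<epsilon> = -1) \<and>
     smooth3_on U \<phi> \<and> smooth3_on U \<xi> \<and> smooth3_on U \<eta> \<and> smooth3_on U gm \<and>
     (\<forall>x\<in>U.
        transpose (gm x) = gm x \<and> det (gm x) \<noteq> 0 \<and>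
        (\<forall>v. \<phi> x *v (\<phi> x *v v) = v - (\<eta> x \<bullet> v) *\<^sub>R \<xi> x) \<and>
        \<eta> x \<bullet> \<xi> x = 1 \<and>
        \<phi> x *v \<xi> x = 0 \<and>
        (\<forall>v. \<eta> x \<bullet> (\<phi> x *v v) = 0) \<and>
        (\<forall>v w. (\<phi> x *v v) \<bullet> (gm x *v (\<phi> x *v w)) = v \<bullet> (gm x *v w) - \<epsilon> * (\<eta> x \<bullet> v) * (\<eta> x \<bullet> w)))"

definition eps_para_sasakian ::
  "(real^3) set \<Rightarrow> (real^3 \<Rightarrow> real^3^3) \<Rightarrow> vf \<Rightarrow> (real^3 \<Rightarrow> real^3) \<Rightarrow> (real^3 \<Rightarrow> real^3^3) \<Rightarrow> real \<Rightarrow> bool" where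
  "eps_para_sasakian U \<phi> \<xi> \<eta> gm \<epsilon> \<longleftrightarrow>
     eps_almost_paracontact U \<phi> \<xi> \<eta> gm \<epsilon> \<and>
     (\<forall>X Y. smooth_vf U X \<longrightarrow> smooth_vf U Y \<longrightarrow> (\<forall>x\<in>U.
        nabla gm X (\<lambda>y. \<phi> y *v Y y) x - \<phi> x *v nabla gm X Y x
        = - (ginner gm (\<lambda>y. \<phi> y *v X y) (\<lambda>y. \<phi> y *v Y y) x) *\<^sub>R \<xi> x
          - (\<epsilon> * (\<eta> x \<bullet> Y x)) *\<^sub>R (\<phi> x *v (\<phi> x *v X x))))"

end

theory Submission
  imports Defs
begin

(* In a 3-dimensional (epsilon)-para Sasakian manifold the structure equation gives
   nabla_X xi = epsilon phi X and hence R(X,Y)xi = eta(X) Y - eta(Y) X.  At each point the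
   curvature is an algebraic curvature tensor (trilinear, skew in X and Y, skew-adjoint, first
   Bianchi identity).  In dimension three, with respect to a g-orthogonal frame e1, e2, xi,
   such a tensor is determined by R(., .)xi and the single number g(R(e1,e2)e2, e1), so R
   coincides with an explicit model tensor containing one free function k.  Tracing the model
   gives S, Q and r = 2k - 4 epsilon, and substituting into the definition of T is linear
   algebra.  Working in a chart, tensoriality of R and the symmetries of its coefficients rest
   on the symmetry of second partial derivatives. *)

lemma vec_sum_axis: "(v::real^'n) = (\<Sum>i\<in>UNIV. v$i *\<^sub>R axis i 1)"
  by (simp add: vec_eq_iff sum_component axis_def if_distrib cong: if_cong)

lemma has_derivative_frechet_derivative:
  "f differentiable at x \<Longrightarrow> (f has_derivative frechet_derivative f (at x)) (at x)"
  using frechet_derivative_works by blast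

lemma pd_eq_has_derivative: "(f has_derivative f') (at x) \<Longrightarrow> pd i f x = f' (axis i 1)"
  unfolding pd_def by (metis frechet_derivative_at)

lemma frechet_derivative_eq_sum_pd:
  fixes f :: "real^3 \<Rightarrow> 'b::real_normed_vector"
  assumes "f differentiable at x"
  shows "frechet_derivative f (at x) v = (\<Sum>i\<in>UNIV. v$i *\<^sub>R pd i f x)"
proof -
  have l: "linear (frechet_derivative f (at x))"
    using has_derivative_frechet_derivative[OF assms] has_derivative_linear by blast
  have "frechet_derivative f (at x) v = frechet_derivative f (at x) (\<Sum>i\<in>UNIV. v$i *\<^sub>R axis i 1)"
    using vec_sum_axis[of v] by simp
  also have "\<dots> = (\<Sum>i\<in>UNIV. v$i *\<^sub>R frechet_derivative f (at x) (axis i 1))"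
    by (simp add: linear_sum[OF l] linear_scale[OF l])
  finally show ?thesis by (simp add: pd_def)
qed

lemma pd_add: "f differentiable at x \<Longrightarrow> g differentiable at x \<Longrightarrow>
   pd i (\<lambda>y. f y + g y) x = pd i f x + pd i g x"
  using pd_eq_has_derivative[OF has_derivative_add[OF has_derivative_frechet_derivative
      has_derivative_frechet_derivative]] by (simp add: pd_def)

lemma pd_diff: "f differentiable at x \<Longrightarrow> g differentiable at x \<Longrightarrow>
   pd i (\<lambda>y. f y - g y) x = pd i f x - pd i g x"
  using pd_eq_has_derivative[OF has_derivative_diff[OF has_derivative_frechet_derivative
      has_derivative_frechet_derivative]] by (simp add: pd_def)

lemma pd_mult:
  fixes f g :: "real^3 \<Rightarrow> real"
  shows "f differentiable at x \<Longrightarrow> g differentiable at x \<Longrightarrow>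
   pd i (\<lambda>y. f y * g y) x = pd i f x * g x + f x * pd i g x"
  using pd_eq_has_derivative[OF has_derivative_mult[OF has_derivative_frechet_derivative
      has_derivative_frechet_derivative]] by (simp add: pd_def add.commute)

lemma pd_sum:
  assumes "finite S" "\<And>j. j \<in> S \<Longrightarrow> f j differentiable at x"
  shows "pd i (\<lambda>y. \<Sum>j\<in>S. f j y) x = (\<Sum>j\<in>S. pd i (f j) x)"
proof -
  have "((\<lambda>y. \<Sum>j\<in>S. f j y) has_derivative (\<lambda>h. \<Sum>j\<in>S. frechet_derivative (f j) (at x) h)) (at x)"
    by (rule has_derivative_sum) (use assms has_derivative_frechet_derivative in auto)
  from pd_eq_has_derivative[OF this] show ?thesis by (simp add: pd_def)
qed

lemma pd_const: "pd i (\<lambda>y. c) x = 0"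
  by (simp add: pd_def)

lemma pd_scaleR_right:
  fixes f :: "real^3 \<Rightarrow> 'b::real_normed_vector"
  shows "f differentiable at x \<Longrightarrow> pd i (\<lambda>y. c *\<^sub>R f y) x = c *\<^sub>R pd i f x"
  using pd_eq_has_derivative[OF has_derivative_scaleR_right[OF has_derivative_frechet_derivative]]
  by (simp add: pd_def)

lemma pd_component:
  fixes f :: "real^3 \<Rightarrow> ('a::real_normed_vector)^'n"
  shows "f differentiable at x \<Longrightarrow> pd i (\<lambda>y. f y $ k) x = pd i f x $ k"
  using pd_eq_has_derivative[OF bounded_linear.has_derivative[OF bounded_linear_vec_nth
      has_derivative_frechet_derivative]] by (simp add: pd_def)

lemma differentiable_component:
  fixes f :: "real^3 \<Rightarrow> ('a::real_normed_vector)^'n"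
  shows "f differentiable at x \<Longrightarrow> (\<lambda>y. f y $ k) differentiable at x"
  by (rule differentiableI, rule bounded_linear.has_derivative[OF bounded_linear_vec_nth
      has_derivative_frechet_derivative])

lemma differentiable_componentwise:
  fixes f :: "real^3 \<Rightarrow> real^'n"
  assumes "\<And>k. (\<lambda>y. f y $ k) differentiable at x"
  shows "f differentiable at x"
proof -
  have e: "f = (\<lambda>y. \<Sum>k\<in>UNIV. (f y $ k) *\<^sub>R axis k 1)"
    using vec_sum_axis by auto
  show ?thesis
    by (subst e) (intro differentiable_sum ballI differentiable_scaleR assms differentiable_const, simp)
qed

lemma pd_transform_within_open:
  assumes "f differentiable at x" "open U" "x \<in> U" "\<And>y. y \<in> U \<Longrightarrow> f y = g y"
  shows "pd i f x = pd i g x"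
  unfolding pd_def using frechet_derivative_transform_within_open[OF assms] by simp

lemma differentiable_transform_within_open:
  assumes "f differentiable at x" "open U" "x \<in> U" "\<And>y. y \<in> U \<Longrightarrow> f y = g y"
  shows "g differentiable at x"
  using assms has_derivative_transform_within_open has_derivative_frechet_derivative
  unfolding differentiable_def by blast

section \<open>Symmetry of second partial derivatives\<close>

lemma has_derivative_along_line:
  fixes f :: "real^3 \<Rightarrow> real"
  assumes "f differentiable at (a + s *\<^sub>R v)"
  shows "((\<lambda>\<sigma>. f (a + \<sigma> *\<^sub>R v)) has_derivative
           (\<lambda>h. h * frechet_derivative f (at (a + s *\<^sub>R v)) v)) (at s)"
proof -
  have l: "linear (frechet_derivative f (at (a + s *\<^sub>R v)))"
    using has_derivative_frechet_derivative[OF assms] has_derivative_linear by blast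
  have d1: "((\<lambda>\<sigma>. a + \<sigma> *\<^sub>R v) has_derivative (\<lambda>h. h *\<^sub>R v)) (at s)"
    by (auto intro!: derivative_eq_intros)
  have "((\<lambda>\<sigma>. f (a + \<sigma> *\<^sub>R v)) has_derivative
          (\<lambda>h. frechet_derivative f (at (a + s *\<^sub>R v)) (h *\<^sub>R v))) (at s)"
    using has_derivative_compose[OF d1 has_derivative_frechet_derivative[OF assms]] by simp
  then show ?thesis by (simp add: linear_scale[OF l])
qed

lemma second_difference_mvt:
  fixes f :: "real^3 \<Rightarrow> real"
  assumes t: "0 < t"
    and fd: "\<And>s. 0 \<le> s \<Longrightarrow> s \<le> t \<Longrightarrow>
               f differentiable at (p + s *\<^sub>R axis i 1) \<and> f differentiable at (q + s *\<^sub>R axis i 1)"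
  obtains \<sigma> where "0 < \<sigma>" "\<sigma> < t"
    "f (p + t *\<^sub>R axis i 1) - f (q + t *\<^sub>R axis i 1) - f p + f q
       = t * (pd i f (p + \<sigma> *\<^sub>R axis i 1) - pd i f (q + \<sigma> *\<^sub>R axis i 1))"
proof -
  define g where "g s = f (p + s *\<^sub>R axis i 1) - f (q + s *\<^sub>R axis i 1)" for s
  define g' where "g' s = (\<lambda>h. h * (pd i f (p + s *\<^sub>R axis i 1) - pd i f (q + s *\<^sub>R axis i 1)))" for s
  have gd: "(g has_derivative g' s) (at s)" if "0 \<le> s" "s \<le> t" for s
    unfolding g_def g'_def
    using has_derivative_diff[OF has_derivative_along_line has_derivative_along_line] fd[OF that]
    by (simp add: pd_def algebra_simps)
  have "continuous_on {0..t} g"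
    by (rule continuous_at_imp_continuous_on) (metis atLeastAtMost_iff gd has_derivative_continuous)
  then obtain \<sigma> where "0 < \<sigma>" "\<sigma> < t" "g t - g 0 = g' \<sigma> (t - 0)"
    using mvt[of 0 t g g'] t gd by auto
  then show ?thesis using that by (simp add: g_def g'_def)
qed

lemma second_difference_estimate:
  fixes f :: "real^3 \<Rightarrow> real"
  assumes U: "open U" "x \<in> U" and fd: "\<forall>y\<in>U. f differentiable at y"
    and pdi: "pd i f differentiable at x" and e: "e > 0" and nw: "norm w = 1"
  shows "\<exists>d>0. \<forall>t. 0 < t \<and> t < d \<longrightarrow>
     \<bar>f ((x + t *\<^sub>R w) + t *\<^sub>R axis i 1) - f (x + t *\<^sub>R axis i 1) - f (x + t *\<^sub>R w) + f x
        - t * t * frechet_derivative (pd i f) (at x) w\<bar> \<le> 3 * e * t * t"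
proof -
  obtain r where r: "r > 0" "ball x r \<subseteq> U" using U openE by blast
  define L where "L = frechet_derivative (pd i f) (at x)"
  have lin: "linear L"
    unfolding L_def using has_derivative_frechet_derivative[OF pdi] has_derivative_linear by blast
  obtain d1 where d1: "d1 > 0"
    "\<forall>y. norm (y - x) < d1 \<longrightarrow> norm (pd i f y - pd i f x - L (y - x)) \<le> e * norm (y - x)"
    using has_derivative_frechet_derivative[OF pdi] e unfolding L_def has_derivative_at_alt by blast
  have near: "\<bar>pd i f y - pd i f x - L (y - x)\<bar> \<le> e * c" if "norm (y - x) \<le> c" "c < d1" for y c
    using d1(2)[rule_format, of y] that e by (smt (verit) mult_left_mono real_norm_def)
  show ?thesis
  proof (intro exI[of _ "min (r/2) (d1/2)"] conjI allI impI)
    show "0 < min (r/2) (d1/2)" using r d1 by simp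
    fix t assume t: "0 < t \<and> t < min (r / 2) (d1 / 2)"
    have n1: "norm ((x + t *\<^sub>R w + s *\<^sub>R axis i 1) - x) \<le> 2 * t"
      and n2: "norm ((x + s *\<^sub>R axis i 1) - x) \<le> t" if "0 \<le> s" "s \<le> t" for s
      using norm_triangle_ineq[of "t *\<^sub>R w" "s *\<^sub>R axis i 1"] nw that t
      by (simp_all add: algebra_simps)
    have "f differentiable at (x + t *\<^sub>R w + s *\<^sub>R axis i 1) \<and> f differentiable at (x + s *\<^sub>R axis i 1)"
      if "0 \<le> s" "s \<le> t" for s
      using fd r n1[OF that] n2[OF that] t by (auto simp: dist_norm norm_minus_commute subset_iff)
    then obtain \<sigma> where \<sigma>: "0 < \<sigma>" "\<sigma> < t"
      and eq: "f (x + t *\<^sub>R w + t *\<^sub>R axis i 1) - f (x + t *\<^sub>R axis i 1) - f (x + t *\<^sub>R w) + f x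
        = t * (pd i f (x + t *\<^sub>R w + \<sigma> *\<^sub>R axis i 1) - pd i f (x + \<sigma> *\<^sub>R axis i 1))"
      using second_difference_mvt[of t f "x + t *\<^sub>R w" i x] t by blast
    define P where "P = x + t *\<^sub>R w + \<sigma> *\<^sub>R axis i 1"
    define Q where "Q = x + \<sigma> *\<^sub>R axis i 1"
    have eP: "\<bar>pd i f P - pd i f x - L (P - x)\<bar> \<le> e * (2 * t)"
      using near[of P "2 * t"] n1[of \<sigma>] \<sigma> t unfolding P_def by simp
    have eQ: "\<bar>pd i f Q - pd i f x - L (Q - x)\<bar> \<le> e * t"
      using near[of Q t] n2[of \<sigma>] \<sigma> t unfolding Q_def by simp
    have "L (P - x) - L (Q - x) = t * L w"
      using linear_add[OF lin, of "t *\<^sub>R w" "Q - x"] linear_scale[OF lin, of t w]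
      unfolding P_def Q_def by (simp add: algebra_simps)
    then have "\<bar>(pd i f P - pd i f Q) - t * L w\<bar> \<le> 3 * e * t"
      using eP eQ by (simp add: abs_le_iff)
    then have "\<bar>t * (pd i f P - pd i f Q) - t * (t * L w)\<bar> \<le> t * (3 * e * t)"
      using t by (simp add: abs_mult right_diff_distrib[symmetric] mult_left_mono)
    then show "\<bar>f ((x + t *\<^sub>R w) + t *\<^sub>R axis i 1) - f (x + t *\<^sub>R axis i 1) - f (x + t *\<^sub>R w) + f x
        - t * t * frechet_derivative (pd i f) (at x) w\<bar> \<le> 3 * e * t * t"
      using eq by (simp add: P_def Q_def L_def algebra_simps)
  qed
qed

lemma pd_commute:
  fixes f :: "real^3 \<Rightarrow> real"
  assumes U: "open U" "x \<in> U" and fd: "\<forall>y\<in>U. f differentiable at y"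
    and pdi: "pd i f differentiable at x" and pdj: "pd j f differentiable at x"
  shows "pd j (pd i f) x = pd i (pd j f) x"
proof (rule ccontr)
  define a where "a = pd j (pd i f) x"
  define b where "b = pd i (pd j f) x"
  assume "pd j (pd i f) x \<noteq> pd i (pd j f) x"
  then have ab: "a \<noteq> b" by (simp add: a_def b_def)
  define e where "e = \<bar>a - b\<bar> / 12"
  have e: "e > 0" using ab by (simp add: e_def)
  obtain d1 where d1: "d1 > 0" "\<forall>t. 0 < t \<and> t < d1 \<longrightarrow>
     \<bar>f ((x + t *\<^sub>R axis j 1) + t *\<^sub>R axis i 1) - f (x + t *\<^sub>R axis i 1) - f (x + t *\<^sub>R axis j 1) + f x
        - t * t * a\<bar> \<le> 3 * e * t * t"
    using second_difference_estimate[OF U fd pdi e, of "axis j 1"] by (auto simp: a_def pd_def)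
  obtain d2 where d2: "d2 > 0" "\<forall>t. 0 < t \<and> t < d2 \<longrightarrow>
     \<bar>f ((x + t *\<^sub>R axis i 1) + t *\<^sub>R axis j 1) - f (x + t *\<^sub>R axis j 1) - f (x + t *\<^sub>R axis i 1) + f x
        - t * t * b\<bar> \<le> 3 * e * t * t"
    using second_difference_estimate[OF U fd pdj e, of "axis i 1"] by (auto simp: b_def pd_def)
  define t where "t = min d1 d2 / 2"
  have t: "0 < t" "t < d1" "t < d2" using d1 d2 by (auto simp: t_def)
  have sw: "(x + t *\<^sub>R axis i 1) + t *\<^sub>R axis j 1 = (x + t *\<^sub>R axis j 1) + t *\<^sub>R axis i 1"
    by (simp add: algebra_simps)
  have "\<bar>t * t * a - t * t * b\<bar> \<le> 6 * e * t * t"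
    using d1(2)[rule_format, of t] d2(2)[rule_format, of t] t sw by (simp add: abs_le_iff)
  moreover have "\<bar>t * t * a - t * t * b\<bar> = t * t * \<bar>a - b\<bar>"
    using t by (simp add: abs_mult right_diff_distrib[symmetric])
  ultimately have "t * t * \<bar>a - b\<bar> \<le> t * t * (6 * e)" by (simp add: algebra_simps)
  then have "\<bar>a - b\<bar> \<le> 6 * e" using t by (simp add: mult_le_cancel_left)
  then show False using e unfolding e_def by simp
qed

definition C1_on :: "(real^3) set \<Rightarrow> (real^3 \<Rightarrow> 'b::real_normed_vector) \<Rightarrow> bool" where
  "C1_on U f \<longleftrightarrow> (\<forall>y\<in>U. f differentiable at y \<and> (\<forall>i. pd i f differentiable at y))"

lemma smooth3_on_imp_C1_on: "smooth3_on U f \<Longrightarrow> C1_on U f"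
  unfolding smooth3_on_def C1_on_def
  by (metis iter_pd.simps(1) iter_pd.simps(2))

lemma C1_on_differentiable: "C1_on U f \<Longrightarrow> y \<in> U \<Longrightarrow> f differentiable at y"
  and C1_on_pd_differentiable: "C1_on U f \<Longrightarrow> y \<in> U \<Longrightarrow> pd i f differentiable at y"
  unfolding C1_on_def by auto

lemma C1_on_component:
  fixes f :: "real^3 \<Rightarrow> ('a::real_normed_vector)^'n"
  assumes "open U" "C1_on U f"
  shows "C1_on U (\<lambda>z. f z $ k)"
  unfolding C1_on_def
proof (intro ballI conjI allI)
  fix y i assume y: "y \<in> U"
  show "(\<lambda>z. f z $ k) differentiable at y"
    using differentiable_component C1_on_differentiable assms y by blast
  have "(\<lambda>z. pd i f z $ k) differentiable at y"
    using differentiable_component C1_on_pd_differentiable assms y by blast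
  moreover have "pd i f z $ k = pd i (\<lambda>z. f z $ k) z" if "z \<in> U" for z
    using pd_component[OF C1_on_differentiable[OF assms(2) that]] by simp
  ultimately show "pd i (\<lambda>z. f z $ k) differentiable at y"
    by (rule differentiable_transform_within_open[OF _ assms(1) y])
qed

lemma C1_on_pd_commute:
  fixes f :: "real^3 \<Rightarrow> real"
  assumes "open U" "C1_on U f" "x \<in> U"
  shows "pd j (pd i f) x = pd i (pd j f) x"
  using pd_commute[of U x f i j] assms by (auto simp: C1_on_def)

lemma iter_pd_const: "iter_pd is (\<lambda>_. c) = (\<lambda>_. if is = [] then c else 0)"
  by (induction "is") (auto simp: pd_def)

lemma smooth3_on_cf: "smooth3_on U (cf v)"
  unfolding smooth3_on_def cf_def iter_pd_const by auto

lemma C1_on_cf: "C1_on U (cf v)" using smooth3_on_imp_C1_on[OF smooth3_on_cf] .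

section \<open>The Levi-Civita connection in a chart\<close>

definition adjugate3 :: "real^3^3 \<Rightarrow> real^3^3" where
  "adjugate3 A = vector [
     vector [A$2$2*A$3$3 - A$2$3*A$3$2, A$1$3*A$3$2 - A$1$2*A$3$3, A$1$2*A$2$3 - A$1$3*A$2$2],
     vector [A$2$3*A$3$1 - A$2$1*A$3$3, A$1$1*A$3$3 - A$1$3*A$3$1, A$1$3*A$2$1 - A$1$1*A$2$3],
     vector [A$2$1*A$3$2 - A$2$2*A$3$1, A$1$2*A$3$1 - A$1$1*A$3$2, A$1$1*A$2$2 - A$1$2*A$2$1]]"

lemma matrix_mul_adjugate3: "A ** adjugate3 A = det A *\<^sub>R mat 1"
  by (simp add: adjugate3_def matrix_matrix_mult_def sum_3 vec_eq_iff forall_3 det_3 mat_def algebra_simps)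

lemma matrix_inv_mult:
  fixes A :: "real^'n^'n"
  assumes "det A \<noteq> 0"
  shows "A ** matrix_inv A = mat 1" "matrix_inv A ** A = mat 1"
proof -
  have "invertible A" using assms invertible_det_nz by blast
  then have "\<exists>A'. A ** A' = mat 1 \<and> A' ** A = mat 1" unfolding invertible_def by blast
  then have "A ** matrix_inv A = mat 1 \<and> matrix_inv A ** A = mat 1"
    unfolding matrix_inv_def by (rule someI_ex)
  then show "A ** matrix_inv A = mat 1" "matrix_inv A ** A = mat 1" by auto
qed

lemma matrix_inv_eq_adjugate3:
  fixes A :: "real^3^3"
  assumes "det A \<noteq> 0"
  shows "matrix_inv A = (1 / det A) *\<^sub>R adjugate3 A"
proof -
  have "matrix_inv A = matrix_inv A ** (A ** ((1 / det A) *\<^sub>R adjugate3 A))"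
    using matrix_mul_adjugate3[of A] assms by (simp add: matrix_scalar_ac scalar_matrix_assoc[symmetric])
  also have "\<dots> = (matrix_inv A ** A) ** ((1 / det A) *\<^sub>R adjugate3 A)" by (simp add: matrix_mul_assoc)
  also have "\<dots> = (1 / det A) *\<^sub>R adjugate3 A" using matrix_inv_mult[OF assms] by simp
  finally show ?thesis .
qed

locale metric_chart =
  fixes U :: "(real^3) set" and gm :: "real^3 \<Rightarrow> real^3^3"
  assumes U_open: "open U"
    and gm_C1: "C1_on U gm"
    and gm_sym: "\<And>y. y \<in> U \<Longrightarrow> transpose (gm y) = gm y"
    and gm_det: "\<And>y. y \<in> U \<Longrightarrow> det (gm y) \<noteq> 0"
begin

(* Christoffel symbols of the first kind: christoffel1 y i j l = \<Gamma>_ijl = g(\<nabla>_\<partial>i \<partial>j, \<partial>l). *)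
definition christoffel1 :: "real^3 \<Rightarrow> 3 \<Rightarrow> 3 \<Rightarrow> 3 \<Rightarrow> real" where
  "christoffel1 y i j l = (1/2) * (pd i (\<lambda>z. gm z $ j $ l) y
     + pd j (\<lambda>z. gm z $ i $ l) y - pd l (\<lambda>z. gm z $ i $ j) y)"

lemma gm_entry_C1_on: "C1_on U (\<lambda>z. gm z $ a $ b)"
proof -
  have "C1_on U (\<lambda>z. gm z $ a)" using C1_on_component[OF U_open gm_C1] .
  then show ?thesis using C1_on_component[OF U_open, of "\<lambda>z. gm z $ a" b] by simp
qed

lemma gm_entry_differentiable: "y \<in> U \<Longrightarrow> (\<lambda>z. gm z $ a $ b) differentiable at y"
  and gm_entry_pd_differentiable: "y \<in> U \<Longrightarrow> pd i (\<lambda>z. gm z $ a $ b) differentiable at y"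
  using gm_entry_C1_on C1_on_differentiable C1_on_pd_differentiable by blast+

lemma gm_entry_sym: "y \<in> U \<Longrightarrow> gm y $ a $ b = gm y $ b $ a"
proof -
  assume y: "y \<in> U"
  have "transpose (gm y) $ a $ b = gm y $ a $ b" using gm_sym[OF y] by simp
  then show ?thesis by (simp add: transpose_def)
qed

lemma pd_gm_entry_sym: "y \<in> U \<Longrightarrow> pd i (\<lambda>z. gm z $ a $ b) y = pd i (\<lambda>z. gm z $ b $ a) y"
  by (rule pd_transform_within_open[OF gm_entry_differentiable U_open]) (auto simp: gm_entry_sym)

lemma matrix_inv_entry_differentiable: "y \<in> U \<Longrightarrow> (\<lambda>z. matrix_inv (gm z) $ k $ l) differentiable at y"
proof -
  assume y: "y \<in> U"
  have e: "adjugate3 (gm z) $ k $ l / det (gm z) = matrix_inv (gm z) $ k $ l" if "z \<in> U" for z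
  proof -
    have "matrix_inv (gm z) = (1 / det (gm z)) *\<^sub>R adjugate3 (gm z)"
      by (rule matrix_inv_eq_adjugate3[OF gm_det[OF that]])
    then have "matrix_inv (gm z) $ k $ l = (1 / det (gm z)) * adjugate3 (gm z) $ k $ l" by simp
    then show ?thesis by simp
  qed
  have dd: "(\<lambda>z. det (gm z)) differentiable at y"
    unfolding det_3 by (intro differentiable_diff differentiable_add differentiable_mult
      gm_entry_differentiable[OF y])
  have da: "(\<lambda>z. adjugate3 (gm z) $ k $ l) differentiable at y"
  proof -
    have "\<forall>k l. (\<lambda>z. adjugate3 (gm z) $ k $ l) differentiable at y"
      unfolding forall_3 adjugate3_def vector_3
      by (intro conjI differentiable_diff differentiable_mult gm_entry_differentiable[OF y])
    then show ?thesis by blast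
  qed
  have d: "(\<lambda>z. adjugate3 (gm z) $ k $ l / det (gm z)) differentiable at y"
    using differentiable_divide[OF da dd gm_det[OF y]] .
  show ?thesis by (rule differentiable_transform_within_open[OF d U_open y e])
qed

lemma christoffel_eq_raise: "christoffel gm y k i j =
    (\<Sum>l\<in>UNIV. matrix_inv (gm y) $ k $ l * christoffel1 y i j l)"
  unfolding christoffel_def christoffel1_def by (simp add: sum_distrib_left algebra_simps)

lemma christoffel_differentiable: "y \<in> U \<Longrightarrow> (\<lambda>z. christoffel gm z k i j) differentiable at y"
  unfolding christoffel_def
  by (intro differentiable_mult differentiable_const differentiable_sum finite_UNIV ballI
      differentiable_add differentiable_diff matrix_inv_entry_differentiable
      gm_entry_pd_differentiable) simp_all

lemma christoffel1_sym: "y \<in> U \<Longrightarrow> christoffel1 y i j l = christoffel1 y j i l"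
  unfolding christoffel1_def using pd_gm_entry_sym by simp

lemma christoffel_sym: "y \<in> U \<Longrightarrow> christoffel gm y k i j = christoffel gm y k j i"
  unfolding christoffel_eq_raise using christoffel1_sym by simp

lemma lower_christoffel: "y \<in> U \<Longrightarrow> (\<Sum>k\<in>UNIV. gm y $ l $ k * christoffel gm y k i j) = christoffel1 y i j l"
proof -
  assume y: "y \<in> U"
  have "(\<Sum>k\<in>UNIV. gm y $ l $ k * christoffel gm y k i j)
      = (\<Sum>k\<in>UNIV. \<Sum>m\<in>UNIV. gm y $ l $ k * matrix_inv (gm y) $ k $ m * christoffel1 y i j m)"
    unfolding christoffel_eq_raise by (simp add: sum_distrib_left mult.assoc)
  also have "\<dots> = (\<Sum>m\<in>UNIV. \<Sum>k\<in>UNIV. gm y $ l $ k * matrix_inv (gm y) $ k $ m * christoffel1 y i j m)"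
    by (rule sum.swap)
  also have "\<dots> = (\<Sum>m\<in>UNIV. (\<Sum>k\<in>UNIV. gm y $ l $ k * matrix_inv (gm y) $ k $ m) * christoffel1 y i j m)"
    by (simp add: sum_distrib_right)
  also have "\<dots> = (\<Sum>m\<in>UNIV. (gm y ** matrix_inv (gm y)) $ l $ m * christoffel1 y i j m)"
    by (simp add: matrix_matrix_mult_def)
  also have "\<dots> = (\<Sum>m\<in>UNIV. (mat 1 :: real^3^3) $ l $ m * christoffel1 y i j m)"
    using matrix_inv_mult(1)[OF gm_det[OF y]] by simp
  also have "\<dots> = (\<Sum>m\<in>UNIV. if m = l then christoffel1 y i j m else 0)"
    by (rule sum.cong) (auto simp: mat_def)
  also have "\<dots> = christoffel1 y i j l" by simp
  finally show ?thesis .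
qed

lemma pd_gm_entry_eq_christoffel1: assumes y: "y \<in> U"
  shows "pd m (\<lambda>z. gm z $ a $ b) y = christoffel1 y m a b + christoffel1 y m b a"
  unfolding christoffel1_def using pd_gm_entry_sym[OF y, of m a b]
    pd_gm_entry_sym[OF y, of a m b] pd_gm_entry_sym[OF y, of b m a] by (simp add: algebra_simps)

lemma pd_christoffel_sym: "x \<in> U \<Longrightarrow> pd m (\<lambda>z. christoffel gm z k i j) x = pd m (\<lambda>z. christoffel gm z k j i) x"
  by (rule pd_transform_within_open[OF christoffel_differentiable U_open]) (auto simp: christoffel_sym)

lemma pd_christoffel1: "x \<in> U \<Longrightarrow> pd m (\<lambda>z. christoffel1 z i j l) x = (1/2) * (pd m (pd i (\<lambda>z. gm z $ j $ l)) x
    + pd m (pd j (\<lambda>z. gm z $ i $ l)) x - pd m (pd l (\<lambda>z. gm z $ i $ j)) x)"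
proof -
  assume x: "x \<in> U"
  have d1: "(\<lambda>z. pd i (\<lambda>z. gm z $ j $ l) z + pd j (\<lambda>z. gm z $ i $ l) z) differentiable at x"
    using gm_entry_pd_differentiable[OF x] by (intro differentiable_add)
  have "pd m (\<lambda>z. christoffel1 z i j l) x =
      pd m (\<lambda>z. (1/2) *\<^sub>R (pd i (\<lambda>z. gm z $ j $ l) z + pd j (\<lambda>z. gm z $ i $ l) z
        - pd l (\<lambda>z. gm z $ i $ j) z)) x"
    unfolding christoffel1_def by simp
  also have "\<dots> = (1/2) *\<^sub>R pd m (\<lambda>z. (pd i (\<lambda>z. gm z $ j $ l) z + pd j (\<lambda>z. gm z $ i $ l) z)
        - pd l (\<lambda>z. gm z $ i $ j) z) x"
    by (rule pd_scaleR_right) (intro differentiable_diff d1 gm_entry_pd_differentiable[OF x])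
  also have "pd m (\<lambda>z. (pd i (\<lambda>z. gm z $ j $ l) z + pd j (\<lambda>z. gm z $ i $ l) z) - pd l (\<lambda>z. gm z $ i $ j) z) x
     = pd m (\<lambda>z. (pd i (\<lambda>z. gm z $ j $ l) z + pd j (\<lambda>z. gm z $ i $ l) z)) x
        - pd m (pd l (\<lambda>z. gm z $ i $ j)) x"
    by (rule pd_diff[OF d1 gm_entry_pd_differentiable[OF x]])
  also have "pd m (\<lambda>z. (pd i (\<lambda>z. gm z $ j $ l) z + pd j (\<lambda>z. gm z $ i $ l) z)) x
     = pd m (pd i (\<lambda>z. gm z $ j $ l)) x + pd m (pd j (\<lambda>z. gm z $ i $ l)) x"
    by (rule pd_add[OF gm_entry_pd_differentiable[OF x] gm_entry_pd_differentiable[OF x]])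
  finally show ?thesis by simp
qed

lemma pd_lower_christoffel: "x \<in> U \<Longrightarrow> (\<Sum>k\<in>UNIV. gm x $ l $ k * pd m (\<lambda>z. christoffel gm z k i j) x)
   = pd m (\<lambda>z. christoffel1 z i j l) x - (\<Sum>k\<in>UNIV. pd m (\<lambda>z. gm z $ l $ k) x * christoffel gm x k i j)"
proof -
  assume x: "x \<in> U"
  have ds: "(\<lambda>z. \<Sum>k\<in>UNIV. gm z $ l $ k * christoffel gm z k i j) differentiable at x"
    by (intro differentiable_sum ballI differentiable_mult gm_entry_differentiable[OF x]
      christoffel_differentiable[OF x]) simp
  have "pd m (\<lambda>z. \<Sum>k\<in>UNIV. gm z $ l $ k * christoffel gm z k i j) x = pd m (\<lambda>z. christoffel1 z i j l) x"
    by (rule pd_transform_within_open[OF ds U_open x lower_christoffel])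
  moreover have "pd m (\<lambda>z. \<Sum>k\<in>UNIV. gm z $ l $ k * christoffel gm z k i j) x
     = (\<Sum>k\<in>UNIV. pd m (\<lambda>z. gm z $ l $ k) x * christoffel gm x k i j
        + gm x $ l $ k * pd m (\<lambda>z. christoffel gm z k i j) x)"
    using x gm_entry_differentiable christoffel_differentiable
    by (simp add: pd_sum pd_mult differentiable_mult)
  ultimately show ?thesis by (simp add: sum.distrib)
qed

end

section \<open>Coordinate expression of the curvature tensor\<close>

(* riemann_coeff \<Gamma> d\<Gamma> m i j k is the k-th component of R(\<partial>m, \<partial>i) \<partial>j, where d\<Gamma> m k i j
   stands for \<partial>m \<Gamma>^k_ij. *)
definition riemann_coeff :: "(3 \<Rightarrow> 3 \<Rightarrow> 3 \<Rightarrow> real) \<Rightarrow> (3 \<Rightarrow> 3 \<Rightarrow> 3 \<Rightarrow> 3 \<Rightarrow> real) \<Rightarrow> 3 \<Rightarrow> 3 \<Rightarrow> 3 \<Rightarrow> 3 \<Rightarrow> real" where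
  "riemann_coeff \<Gamma> d\<Gamma> m i j k = d\<Gamma> m k i j - d\<Gamma> i k m j + (\<Sum>n\<in>UNIV. \<Gamma> k m n * \<Gamma> n i j - \<Gamma> k i n * \<Gamma> n m j)"

lemma lie_term_dZ_expand: fixes X Y :: "3 \<Rightarrow> real" and dX dY dZ :: "3 \<Rightarrow> 3 \<Rightarrow> real"
  shows "(\<Sum>i\<in>UNIV. ((\<Sum>m\<in>UNIV. X m * dY m i) - (\<Sum>m\<in>UNIV. Y m * dX m i)) * dZ i k)
   = (\<Sum>m\<in>UNIV. X m * (\<Sum>i\<in>UNIV. dY m i * dZ i k)) - (\<Sum>m\<in>UNIV. Y m * (\<Sum>i\<in>UNIV. dX m i * dZ i k))"
  unfolding sum_3 by (simp add: algebra_simps)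

lemma second_derivative_terms_swap: fixes X Y :: "3 \<Rightarrow> real" and ddZ :: "3 \<Rightarrow> 3 \<Rightarrow> 3 \<Rightarrow> real"
  assumes schw: "\<And>m i. ddZ m i k = ddZ i m k"
  shows "(\<Sum>m\<in>UNIV. X m * (\<Sum>i\<in>UNIV. Y i * ddZ m i k)) = (\<Sum>m\<in>UNIV. Y m * (\<Sum>i\<in>UNIV. X i * ddZ m i k))"
  unfolding sum_3 using schw[of 1 2] schw[of 1 3] schw[of 2 3] by (simp add: algebra_simps)

lemma dchristoffel_terms_collect: fixes X Y Z :: "3 \<Rightarrow> real" and d\<Gamma> :: "3 \<Rightarrow> 3 \<Rightarrow> 3 \<Rightarrow> 3 \<Rightarrow> real"
  shows "(\<Sum>m\<in>UNIV. X m * (\<Sum>i\<in>UNIV. \<Sum>j\<in>UNIV. d\<Gamma> m k i j * Y i * Z j))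
    - (\<Sum>m\<in>UNIV. Y m * (\<Sum>i\<in>UNIV. \<Sum>j\<in>UNIV. d\<Gamma> m k i j * X i * Z j))
   = (\<Sum>m\<in>UNIV. \<Sum>i\<in>UNIV. \<Sum>j\<in>UNIV. X m * Y i * Z j * (d\<Gamma> m k i j - d\<Gamma> i k m j))"
  unfolding sum_3 by (simp add: algebra_simps)

lemma lie_term_christoffel_expand: fixes X Y Z :: "3 \<Rightarrow> real"
    and dX dY :: "3 \<Rightarrow> 3 \<Rightarrow> real" and \<Gamma> :: "3 \<Rightarrow> 3 \<Rightarrow> 3 \<Rightarrow> real"
  shows "(\<Sum>i\<in>UNIV. \<Sum>j\<in>UNIV. \<Gamma> k i j * ((\<Sum>m\<in>UNIV. X m * dY m i) - (\<Sum>m\<in>UNIV. Y m * dX m i)) * Z j)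
   = (\<Sum>m\<in>UNIV. X m * (\<Sum>i\<in>UNIV. \<Sum>j\<in>UNIV. \<Gamma> k i j * dY m i * Z j))
     - (\<Sum>m\<in>UNIV. Y m * (\<Sum>i\<in>UNIV. \<Sum>j\<in>UNIV. \<Gamma> k i j * dX m i * Z j))"
  unfolding sum_3 by (simp add: algebra_simps)

lemma christoffel_dZ_terms_swap: fixes X Y :: "3 \<Rightarrow> real" and dZ :: "3 \<Rightarrow> 3 \<Rightarrow> real" and \<Gamma> :: "3 \<Rightarrow> 3 \<Rightarrow> 3 \<Rightarrow> real"
  shows "(\<Sum>m\<in>UNIV. X m * (\<Sum>i\<in>UNIV. \<Sum>j\<in>UNIV. \<Gamma> k i j * Y i * dZ m j))
   = (\<Sum>m\<in>UNIV. \<Sum>n\<in>UNIV. \<Gamma> k m n * Y m * (\<Sum>i\<in>UNIV. X i * dZ i n))"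
  unfolding sum_3 by (simp add: algebra_simps)

lemma christoffel_product_terms_collect: fixes X Y Z :: "3 \<Rightarrow> real" and \<Gamma> :: "3 \<Rightarrow> 3 \<Rightarrow> 3 \<Rightarrow> real"
  shows "(\<Sum>m\<in>UNIV. \<Sum>n\<in>UNIV. \<Gamma> k m n * X m * (\<Sum>i\<in>UNIV. \<Sum>j\<in>UNIV. \<Gamma> n i j * Y i * Z j))
    - (\<Sum>m\<in>UNIV. \<Sum>n\<in>UNIV. \<Gamma> k m n * Y m * (\<Sum>i\<in>UNIV. \<Sum>j\<in>UNIV. \<Gamma> n i j * X i * Z j))
   = (\<Sum>m\<in>UNIV. \<Sum>i\<in>UNIV. \<Sum>j\<in>UNIV. X m * Y i * Z j * (\<Sum>n\<in>UNIV. \<Gamma> k m n * \<Gamma> n i j - \<Gamma> k i n * \<Gamma> n m j))"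
  unfolding sum_3 by (simp add: algebra_simps)

(* P, Q, NY, NX, W are the components of \<partial>m (\<nabla>_Y Z), \<partial>m (\<nabla>_X Z), \<nabla>_Y Z, \<nabla>_X Z and
   [X,Y]; in R(X,Y)Z the first derivatives of X and Y and the second derivatives of Z cancel. *)
lemma curvature_coordinate_identity:
  fixes X Y Z :: "3 \<Rightarrow> real" and dX dY dZ :: "3 \<Rightarrow> 3 \<Rightarrow> real" and ddZ :: "3 \<Rightarrow> 3 \<Rightarrow> 3 \<Rightarrow> real"
    and \<Gamma> :: "3 \<Rightarrow> 3 \<Rightarrow> 3 \<Rightarrow> real" and d\<Gamma> :: "3 \<Rightarrow> 3 \<Rightarrow> 3 \<Rightarrow> 3 \<Rightarrow> real"
    and P Q NX NY W :: "3 \<Rightarrow> real"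
  assumes schw: "\<And>m i. ddZ m i k = ddZ i m k"
    and P: "\<And>m. P m = (\<Sum>i\<in>UNIV. dY m i * dZ i k) + (\<Sum>i\<in>UNIV. Y i * ddZ m i k)
        + (\<Sum>i\<in>UNIV. \<Sum>j\<in>UNIV. d\<Gamma> m k i j * Y i * Z j) + (\<Sum>i\<in>UNIV. \<Sum>j\<in>UNIV. \<Gamma> k i j * dY m i * Z j)
        + (\<Sum>i\<in>UNIV. \<Sum>j\<in>UNIV. \<Gamma> k i j * Y i * dZ m j)"
    and Q: "\<And>m. Q m = (\<Sum>i\<in>UNIV. dX m i * dZ i k) + (\<Sum>i\<in>UNIV. X i * ddZ m i k)
        + (\<Sum>i\<in>UNIV. \<Sum>j\<in>UNIV. d\<Gamma> m k i j * X i * Z j) + (\<Sum>i\<in>UNIV. \<Sum>j\<in>UNIV. \<Gamma> k i j * dX m i * Z j)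
        + (\<Sum>i\<in>UNIV. \<Sum>j\<in>UNIV. \<Gamma> k i j * X i * dZ m j)"
    and NY: "\<And>n. NY n = (\<Sum>i\<in>UNIV. Y i * dZ i n) + (\<Sum>i\<in>UNIV. \<Sum>j\<in>UNIV. \<Gamma> n i j * Y i * Z j)"
    and NX: "\<And>n. NX n = (\<Sum>i\<in>UNIV. X i * dZ i n) + (\<Sum>i\<in>UNIV. \<Sum>j\<in>UNIV. \<Gamma> n i j * X i * Z j)"
    and W: "\<And>i. W i = (\<Sum>m\<in>UNIV. X m * dY m i) - (\<Sum>m\<in>UNIV. Y m * dX m i)"
  shows "((\<Sum>m\<in>UNIV. X m * P m) + (\<Sum>m\<in>UNIV. \<Sum>n\<in>UNIV. \<Gamma> k m n * X m * NY n))
       - ((\<Sum>m\<in>UNIV. Y m * Q m) + (\<Sum>m\<in>UNIV. \<Sum>n\<in>UNIV. \<Gamma> k m n * Y m * NX n))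
       - ((\<Sum>i\<in>UNIV. W i * dZ i k) + (\<Sum>i\<in>UNIV. \<Sum>j\<in>UNIV. \<Gamma> k i j * W i * Z j))
     = (\<Sum>m\<in>UNIV. \<Sum>i\<in>UNIV. \<Sum>j\<in>UNIV. X m * Y i * Z j * riemann_coeff \<Gamma> d\<Gamma> m i j k)"
proof -
  have R: "(\<Sum>m\<in>UNIV. \<Sum>i\<in>UNIV. \<Sum>j\<in>UNIV. X m * Y i * Z j * riemann_coeff \<Gamma> d\<Gamma> m i j k)
    = (\<Sum>m\<in>UNIV. \<Sum>i\<in>UNIV. \<Sum>j\<in>UNIV. X m * Y i * Z j * (d\<Gamma> m k i j - d\<Gamma> i k m j))
    + (\<Sum>m\<in>UNIV. \<Sum>i\<in>UNIV. \<Sum>j\<in>UNIV. X m * Y i * Z j * (\<Sum>n\<in>UNIV. \<Gamma> k m n * \<Gamma> n i j - \<Gamma> k i n * \<Gamma> n m j))"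
    unfolding riemann_coeff_def sum.distrib[symmetric] by (simp add: algebra_simps)
  have sX: "(\<Sum>m\<in>UNIV. X m * P m) = (\<Sum>m\<in>UNIV. X m * (\<Sum>i\<in>UNIV. dY m i * dZ i k))
        + (\<Sum>m\<in>UNIV. X m * (\<Sum>i\<in>UNIV. Y i * ddZ m i k))
        + (\<Sum>m\<in>UNIV. X m * (\<Sum>i\<in>UNIV. \<Sum>j\<in>UNIV. d\<Gamma> m k i j * Y i * Z j))
        + (\<Sum>m\<in>UNIV. X m * (\<Sum>i\<in>UNIV. \<Sum>j\<in>UNIV. \<Gamma> k i j * dY m i * Z j))
        + (\<Sum>m\<in>UNIV. X m * (\<Sum>i\<in>UNIV. \<Sum>j\<in>UNIV. \<Gamma> k i j * Y i * dZ m j))"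
    unfolding P by (simp add: distrib_left sum.distrib)
  have sY: "(\<Sum>m\<in>UNIV. Y m * Q m) = (\<Sum>m\<in>UNIV. Y m * (\<Sum>i\<in>UNIV. dX m i * dZ i k))
        + (\<Sum>m\<in>UNIV. Y m * (\<Sum>i\<in>UNIV. X i * ddZ m i k))
        + (\<Sum>m\<in>UNIV. Y m * (\<Sum>i\<in>UNIV. \<Sum>j\<in>UNIV. d\<Gamma> m k i j * X i * Z j))
        + (\<Sum>m\<in>UNIV. Y m * (\<Sum>i\<in>UNIV. \<Sum>j\<in>UNIV. \<Gamma> k i j * dX m i * Z j))
        + (\<Sum>m\<in>UNIV. Y m * (\<Sum>i\<in>UNIV. \<Sum>j\<in>UNIV. \<Gamma> k i j * X i * dZ m j))"
    unfolding Q by (simp add: distrib_left sum.distrib)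
  have nY: "(\<Sum>m\<in>UNIV. \<Sum>n\<in>UNIV. \<Gamma> k m n * X m * NY n)
     = (\<Sum>m\<in>UNIV. \<Sum>n\<in>UNIV. \<Gamma> k m n * X m * (\<Sum>i\<in>UNIV. Y i * dZ i n))
     + (\<Sum>m\<in>UNIV. \<Sum>n\<in>UNIV. \<Gamma> k m n * X m * (\<Sum>i\<in>UNIV. \<Sum>j\<in>UNIV. \<Gamma> n i j * Y i * Z j))"
    unfolding NY by (simp add: distrib_left sum.distrib)
  have nX: "(\<Sum>m\<in>UNIV. \<Sum>n\<in>UNIV. \<Gamma> k m n * Y m * NX n)
     = (\<Sum>m\<in>UNIV. \<Sum>n\<in>UNIV. \<Gamma> k m n * Y m * (\<Sum>i\<in>UNIV. X i * dZ i n))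
     + (\<Sum>m\<in>UNIV. \<Sum>n\<in>UNIV. \<Gamma> k m n * Y m * (\<Sum>i\<in>UNIV. \<Sum>j\<in>UNIV. \<Gamma> n i j * X i * Z j))"
    unfolding NX by (simp add: distrib_left sum.distrib)
  have w1: "(\<Sum>i\<in>UNIV. W i * dZ i k) = (\<Sum>i\<in>UNIV. ((\<Sum>m\<in>UNIV. X m * dY m i) - (\<Sum>m\<in>UNIV. Y m * dX m i)) * dZ i k)"
    unfolding W ..
  have w2: "(\<Sum>i\<in>UNIV. \<Sum>j\<in>UNIV. \<Gamma> k i j * W i * Z j)
     = (\<Sum>i\<in>UNIV. \<Sum>j\<in>UNIV. \<Gamma> k i j * ((\<Sum>m\<in>UNIV. X m * dY m i) - (\<Sum>m\<in>UNIV. Y m * dX m i)) * Z j)"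
    unfolding W ..
  show ?thesis
    unfolding R sX sY nY nX w1 w2 lie_term_dZ_expand lie_term_christoffel_expand
      second_derivative_terms_swap[where X=X and Y=Y and ddZ=ddZ and k=k, OF schw]
    using dchristoffel_terms_collect[where X=X and Y=Y and Z=Z and k=k and d\<Gamma>=d\<Gamma>]
      christoffel_product_terms_collect[where X=X and Y=Y and Z=Z and k=k and \<Gamma>=\<Gamma>]
      christoffel_dZ_terms_swap[where X=X and Y=Y and k=k and dZ=dZ and \<Gamma>=\<Gamma>]
      christoffel_dZ_terms_swap[where X=Y and Y=X and k=k and dZ=dZ and \<Gamma>=\<Gamma>]
    by linarith
qed

(* The hypotheses are the coordinate forms of g_lk \<Gamma>^k_ij = \<Gamma>_ijl, of metric compatibility and of
   its derivative, with h m a b c standing for \<partial>m \<partial>a g_bc. *)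
lemma lowered_riemann_coeff_skew:
  fixes g :: "3 \<Rightarrow> 3 \<Rightarrow> real" and \<Gamma> :: "3 \<Rightarrow> 3 \<Rightarrow> 3 \<Rightarrow> real" and d\<Gamma> :: "3 \<Rightarrow> 3 \<Rightarrow> 3 \<Rightarrow> 3 \<Rightarrow> real"
    and L :: "3 \<Rightarrow> 3 \<Rightarrow> 3 \<Rightarrow> real" and dL :: "3 \<Rightarrow> 3 \<Rightarrow> 3 \<Rightarrow> 3 \<Rightarrow> real"
    and dg :: "3 \<Rightarrow> 3 \<Rightarrow> 3 \<Rightarrow> real" and h :: "3 \<Rightarrow> 3 \<Rightarrow> 3 \<Rightarrow> 3 \<Rightarrow> real"
  assumes gsym: "\<And>a b. g a b = g b a"
    and lower: "\<And>i j l. (\<Sum>k\<in>UNIV. g l k * \<Gamma> k i j) = L i j l"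
    and compat: "\<And>m a b. dg m a b = L m a b + L m b a"
    and dlower: "\<And>m i j l. (\<Sum>k\<in>UNIV. g l k * d\<Gamma> m k i j) = dL m i j l - (\<Sum>k\<in>UNIV. dg m l k * \<Gamma> k i j)"
    and dL: "\<And>m i j l. dL m i j l = (1/2) * (h m i j l + h m j i l - h m l i j)"
    and schw: "\<And>m a b c. h m a b c = h a m b c"
  shows "(\<Sum>k\<in>UNIV. g l k * riemann_coeff \<Gamma> d\<Gamma> m i j k) = - (\<Sum>k\<in>UNIV. g j k * riemann_coeff \<Gamma> d\<Gamma> m i l k)"
proof -
  define B where "B a b c d = (\<Sum>k\<in>UNIV. L a b k * \<Gamma> k c d)" for a b c d
  have Bsym: "B a b c d = B c d a b" for a b c d
  proof -
    have "B a b c d = (\<Sum>k\<in>UNIV. \<Sum>p\<in>UNIV. g k p * \<Gamma> p a b * \<Gamma> k c d)"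
      unfolding B_def lower[symmetric] by (simp add: sum_distrib_right)
    also have "\<dots> = (\<Sum>p\<in>UNIV. \<Sum>k\<in>UNIV. g k p * \<Gamma> p a b * \<Gamma> k c d)" by (rule sum.swap)
    also have "\<dots> = (\<Sum>p\<in>UNIV. \<Sum>k\<in>UNIV. g p k * \<Gamma> k c d * \<Gamma> p a b)"
      by (simp add: gsym mult.commute mult.left_commute)
    also have "\<dots> = B c d a b"
      unfolding B_def lower[symmetric] by (simp add: sum_distrib_right)
    finally show ?thesis .
  qed
  have q: "(\<Sum>k\<in>UNIV. g l k * (\<Sum>n\<in>UNIV. \<Gamma> k a n * \<Gamma> n c d)) = (\<Sum>n\<in>UNIV. L a n l * \<Gamma> n c d)" for l a c d
  proof -
    have "(\<Sum>k\<in>UNIV. g l k * (\<Sum>n\<in>UNIV. \<Gamma> k a n * \<Gamma> n c d)) = (\<Sum>k\<in>UNIV. \<Sum>n\<in>UNIV. g l k * \<Gamma> k a n * \<Gamma> n c d)"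
      by (simp add: sum_distrib_left mult.assoc)
    also have "\<dots> = (\<Sum>n\<in>UNIV. \<Sum>k\<in>UNIV. g l k * \<Gamma> k a n * \<Gamma> n c d)" by (rule sum.swap)
    also have "\<dots> = (\<Sum>n\<in>UNIV. L a n l * \<Gamma> n c d)" unfolding lower[symmetric] by (simp add: sum_distrib_right)
    finally show ?thesis .
  qed
  have dgB: "(\<Sum>k\<in>UNIV. dg m l k * \<Gamma> k i j) = B m l i j + (\<Sum>n\<in>UNIV. L m n l * \<Gamma> n i j)" for m l i j
    unfolding B_def compat by (simp add: algebra_simps sum.distrib)
  have key: "(\<Sum>k\<in>UNIV. g l k * riemann_coeff \<Gamma> d\<Gamma> m i j k)
      = dL m i j l - dL i m j l - B m l i j + B i l m j" for m i j l
  proof -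
    have "(\<Sum>k\<in>UNIV. g l k * riemann_coeff \<Gamma> d\<Gamma> m i j k) =
       (\<Sum>k\<in>UNIV. g l k * d\<Gamma> m k i j) - (\<Sum>k\<in>UNIV. g l k * d\<Gamma> i k m j)
       + (\<Sum>k\<in>UNIV. g l k * (\<Sum>n\<in>UNIV. \<Gamma> k m n * \<Gamma> n i j)) - (\<Sum>k\<in>UNIV. g l k * (\<Sum>n\<in>UNIV. \<Gamma> k i n * \<Gamma> n m j))"
      unfolding riemann_coeff_def by (simp add: algebra_simps sum.distrib sum_subtractf)
    also have "\<dots> = (dL m i j l - (\<Sum>k\<in>UNIV. dg m l k * \<Gamma> k i j)) - (dL i m j l - (\<Sum>k\<in>UNIV. dg i l k * \<Gamma> k m j))
       + (\<Sum>n\<in>UNIV. L m n l * \<Gamma> n i j) - (\<Sum>n\<in>UNIV. L i n l * \<Gamma> n m j)"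
      by (simp only: dlower q)
    also have "\<dots> = dL m i j l - dL i m j l - B m l i j + B i l m j"
      unfolding dgB by simp
    finally show ?thesis .
  qed
  show ?thesis unfolding key dL using Bsym[of m l i j] Bsym[of m j i l] schw[of m i] schw[of i m]
    by (simp add: algebra_simps)
qed

lemma sum_rotate3: "(\<Sum>m\<in>A. \<Sum>i\<in>B. \<Sum>j\<in>C. f m i j) = (\<Sum>j\<in>C. \<Sum>m\<in>A. \<Sum>i\<in>B. f m i j)"
proof -
  have "(\<Sum>m\<in>A. \<Sum>i\<in>B. \<Sum>j\<in>C. f m i j) = (\<Sum>m\<in>A. \<Sum>j\<in>C. \<Sum>i\<in>B. f m i j)"
    by (rule sum.cong[OF refl]) (rule sum.swap)
  also have "\<dots> = (\<Sum>j\<in>C. \<Sum>m\<in>A. \<Sum>i\<in>B. f m i j)" by (rule sum.swap)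
  finally show ?thesis .
qed

lemma riemann_coeff_antisym: "riemann_coeff \<Gamma> d\<Gamma> m i j k = - riemann_coeff \<Gamma> d\<Gamma> i m j k"
  unfolding riemann_coeff_def by (simp add: sum_subtractf)

lemma riemann_coeff_bianchi:
  assumes "\<And>k a b. \<Gamma> k a b = \<Gamma> k b a" "\<And>m k a b. d\<Gamma> m k a b = d\<Gamma> m k b a"
  shows "riemann_coeff \<Gamma> d\<Gamma> m i j k + riemann_coeff \<Gamma> d\<Gamma> i j m k + riemann_coeff \<Gamma> d\<Gamma> j m i k = 0"
proof -
  have s: "(\<Sum>n\<in>UNIV. \<Gamma> k m n * \<Gamma> n i j - \<Gamma> k i n * \<Gamma> n m j)
      + (\<Sum>n\<in>UNIV. \<Gamma> k i n * \<Gamma> n j m - \<Gamma> k j n * \<Gamma> n i m)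
      + (\<Sum>n\<in>UNIV. \<Gamma> k j n * \<Gamma> n m i - \<Gamma> k m n * \<Gamma> n j i) = 0"
    using assms(1) by (simp add: sum_subtractf)
  show ?thesis unfolding riemann_coeff_def using s assms(2)[of m k i j] assms(2)[of i k j m]
    assms(2)[of j k m i]
    by linarith
qed

lemma metric_compat_identity:
  fixes v A B :: "3 \<Rightarrow> real" and g dA dB :: "3 \<Rightarrow> 3 \<Rightarrow> real"
    and dg \<Gamma> :: "3 \<Rightarrow> 3 \<Rightarrow> 3 \<Rightarrow> real"
  assumes gsym: "\<And>a b. g a b = g b a"
    and dg: "\<And>m a b. dg m a b = (\<Sum>p\<in>UNIV. g b p * \<Gamma> p m a) + (\<Sum>p\<in>UNIV. g a p * \<Gamma> p m b)"
  shows "(\<Sum>m\<in>UNIV. v m * (\<Sum>l\<in>UNIV. \<Sum>k\<in>UNIV. dB m l * g l k * A k + B l * dg m l k * A k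
        + B l * g l k * dA m k))
   = (\<Sum>l\<in>UNIV. B l * (\<Sum>k\<in>UNIV. g l k * ((\<Sum>i\<in>UNIV. v i * dA i k) + (\<Sum>i\<in>UNIV. \<Sum>j\<in>UNIV. \<Gamma> k i j * v i * A j))))
   + (\<Sum>l\<in>UNIV. A l * (\<Sum>k\<in>UNIV. g l k * ((\<Sum>i\<in>UNIV. v i * dB i k) + (\<Sum>i\<in>UNIV. \<Sum>j\<in>UNIV. \<Gamma> k i j * v i * B j))))"
  unfolding dg sum_3 using gsym[of 1 2] gsym[of 1 3] gsym[of 2 3] by (simp add: algebra_simps)

section \<open>The curvature tensor at a point\<close>

lemma nabla_component:
  assumes "Z differentiable at y"
  shows "nabla gm Y Z y $ k = (\<Sum>i\<in>UNIV. Y y $ i * pd i (\<lambda>z. Z z $ k) y)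
     + (\<Sum>i\<in>UNIV. \<Sum>j\<in>UNIV. christoffel gm y k i j * Y y $ i * Z y $ j)"
  unfolding nabla_def using assms
  by (simp add: frechet_derivative_eq_sum_pd sum_component pd_component)

lemma lie_component:
  assumes "X differentiable at y" "Y differentiable at y"
  shows "lie X Y y $ i = (\<Sum>m\<in>UNIV. X y $ m * pd m (\<lambda>z. Y z $ i) y)
          - (\<Sum>m\<in>UNIV. Y y $ m * pd m (\<lambda>z. X z $ i) y)"
  unfolding lie_def using assms
  by (simp add: frechet_derivative_eq_sum_pd sum_component pd_component)

lemma sum_swap_outer3:
  "(\<Sum>a\<in>A. \<Sum>m\<in>M. \<Sum>i\<in>I. \<Sum>j\<in>J. f a m i j) = (\<Sum>m\<in>M. \<Sum>i\<in>I. \<Sum>j\<in>J. \<Sum>a\<in>A. f a m i j)"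
proof -
  have "(\<Sum>a\<in>A. \<Sum>m\<in>M. \<Sum>i\<in>I. \<Sum>j\<in>J. f a m i j) = (\<Sum>m\<in>M. \<Sum>a\<in>A. \<Sum>i\<in>I. \<Sum>j\<in>J. f a m i j)"
    by (rule sum.swap)
  also have "\<dots> = (\<Sum>m\<in>M. \<Sum>i\<in>I. \<Sum>a\<in>A. \<Sum>j\<in>J. f a m i j)"
    by (rule sum.cong[OF refl]) (rule sum.swap)
  also have "\<dots> = (\<Sum>m\<in>M. \<Sum>i\<in>I. \<Sum>j\<in>J. \<Sum>a\<in>A. f a m i j)"
    by (intro sum.cong[OF refl]) (rule sum.swap)
  finally show ?thesis .
qed

definition algebraic_curvature ::
  "real^3^3 \<Rightarrow> (real^3 \<Rightarrow> real^3 \<Rightarrow> real^3 \<Rightarrow> real^3) \<Rightarrow> bool" where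
  "algebraic_curvature G R \<longleftrightarrow>
     (\<forall>v w. linear (\<lambda>u. R u v w)) \<and> (\<forall>u w. linear (\<lambda>v. R u v w)) \<and> (\<forall>u v. linear (R u v)) \<and>
     (\<forall>u v w. R u v w = - R v u w) \<and>
     (\<forall>u v w z. R u v w \<bullet> (G *v z) = - (R u v z \<bullet> (G *v w))) \<and>
     (\<forall>u v w. R u v w + R v w u + R w u v = 0)"

context metric_chart
begin

abbreviation curv_coeff :: "real^3 \<Rightarrow> 3 \<Rightarrow> 3 \<Rightarrow> 3 \<Rightarrow> 3 \<Rightarrow> real" where
  "curv_coeff x \<equiv> riemann_coeff (christoffel gm x) (\<lambda>m k i j. pd m (\<lambda>z. christoffel gm z k i j) x)"

definition riemann :: "real^3 \<Rightarrow> real^3 \<Rightarrow> real^3 \<Rightarrow> real^3 \<Rightarrow> real^3" where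
  "riemann x u v w = (\<chi> k. \<Sum>m\<in>UNIV. \<Sum>i\<in>UNIV. \<Sum>j\<in>UNIV. u $ m * v $ i * w $ j *
       curv_coeff x m i j k)"

lemma nabla_C1_on:
  fixes B Z :: "real^3 \<Rightarrow> real^3"
  assumes x: "x \<in> U" and B: "C1_on U B" and Z: "C1_on U Z"
  shows "nabla gm B Z differentiable at x"
    and "pd m (\<lambda>z. nabla gm B Z z $ k) x =
       (\<Sum>i\<in>UNIV. pd m (\<lambda>z. B z $ i) x * pd i (\<lambda>z. Z z $ k) x)
        + (\<Sum>i\<in>UNIV. B x $ i * pd m (pd i (\<lambda>z. Z z $ k)) x)
        + (\<Sum>i\<in>UNIV. \<Sum>j\<in>UNIV. pd m (\<lambda>z. christoffel gm z k i j) x * B x $ i * Z x $ j)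
        + (\<Sum>i\<in>UNIV. \<Sum>j\<in>UNIV. christoffel gm x k i j * pd m (\<lambda>z. B z $ i) x * Z x $ j)
        + (\<Sum>i\<in>UNIV. \<Sum>j\<in>UNIV. christoffel gm x k i j * B x $ i * pd m (\<lambda>z. Z z $ j) x)"
proof -
  have Bc: "C1_on U (\<lambda>z. B z $ i)" for i using C1_on_component[OF U_open B] .
  have Zc: "C1_on U (\<lambda>z. Z z $ i)" for i using C1_on_component[OF U_open Z] .
  have dB: "(\<lambda>z. B z $ i) differentiable at x" for i using C1_on_differentiable[OF Bc x] .
  have dZ: "(\<lambda>z. Z z $ i) differentiable at x" for i using C1_on_differentiable[OF Zc x] .
  have dpZ: "pd j (\<lambda>z. Z z $ i) differentiable at x" for i j using C1_on_pd_differentiable[OF Zc x] .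
  have dG: "(\<lambda>z. christoffel gm z k i j) differentiable at x" for k i j
    using christoffel_differentiable[OF x] .
  define N where "N k z = (\<Sum>i\<in>UNIV. B z $ i * pd i (\<lambda>z. Z z $ k) z)
     + (\<Sum>i\<in>UNIV. \<Sum>j\<in>UNIV. christoffel gm z k i j * B z $ i * Z z $ j)" for k z
  have eqN: "N k z = nabla gm B Z z $ k" if "z \<in> U" for k z
    unfolding N_def using nabla_component[OF C1_on_differentiable[OF Z that]] by simp
  have dN: "N k differentiable at x" for k
    unfolding N_def
    by (intro differentiable_add differentiable_sum ballI differentiable_mult dB dZ dpZ dG) simp_all
  have pN: "pd m (\<lambda>z. nabla gm B Z z $ k) x = pd m (N k) x" for k
    using pd_transform_within_open[OF dN U_open x eqN] by simp
  have dnc: "(\<lambda>z. nabla gm B Z z $ k) differentiable at x" for k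
    using differentiable_transform_within_open[OF dN U_open x eqN] .
  show "nabla gm B Z differentiable at x" by (rule differentiable_componentwise) (rule dnc)
  have "pd m (N k) x =
       (\<Sum>i\<in>UNIV. pd m (\<lambda>z. B z $ i) x * pd i (\<lambda>z. Z z $ k) x + B x $ i * pd m (pd i (\<lambda>z. Z z $ k)) x)
        + (\<Sum>i\<in>UNIV. \<Sum>j\<in>UNIV. (pd m (\<lambda>z. christoffel gm z k i j) x * B x $ i
            + christoffel gm x k i j * pd m (\<lambda>z. B z $ i) x) * Z x $ j
             + christoffel gm x k i j * B x $ i * pd m (\<lambda>z. Z z $ j) x)"
    unfolding N_def
    by (simp add: pd_add pd_sum pd_mult dB dZ dpZ dG)
  also have "\<dots> = (\<Sum>i\<in>UNIV. pd m (\<lambda>z. B z $ i) x * pd i (\<lambda>z. Z z $ k) x)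
        + (\<Sum>i\<in>UNIV. B x $ i * pd m (pd i (\<lambda>z. Z z $ k)) x)
        + (\<Sum>i\<in>UNIV. \<Sum>j\<in>UNIV. pd m (\<lambda>z. christoffel gm z k i j) x * B x $ i * Z x $ j)
        + (\<Sum>i\<in>UNIV. \<Sum>j\<in>UNIV. christoffel gm x k i j * pd m (\<lambda>z. B z $ i) x * Z x $ j)
        + (\<Sum>i\<in>UNIV. \<Sum>j\<in>UNIV. christoffel gm x k i j * B x $ i * pd m (\<lambda>z. Z z $ j) x)"
    by (simp add: sum.distrib algebra_simps)
  finally show "pd m (\<lambda>z. nabla gm B Z z $ k) x = \<dots>" using pN by simp
qed

lemma curv_eq_riemann:
  assumes x: "x \<in> U" and X: "C1_on U X" and Y: "C1_on U Y" and Z: "C1_on U Z"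
  shows "curv gm X Y Z x = riemann x (X x) (Y x) (Z x)"
proof -
  have Zc: "C1_on U (\<lambda>z. Z z $ i)" for i using C1_on_component[OF U_open Z] .
  show ?thesis
  proof (subst vec_eq_iff, intro allI)
    fix k
    have e1: "nabla gm X (nabla gm Y Z) x $ k = (\<Sum>m\<in>UNIV. X x $ m * pd m (\<lambda>z. nabla gm Y Z z $ k) x)
      + (\<Sum>m\<in>UNIV. \<Sum>n\<in>UNIV. christoffel gm x k m n * X x $ m * nabla gm Y Z x $ n)"
      using nabla_component[OF nabla_C1_on(1)[OF x Y Z]] .
    have e2: "nabla gm Y (nabla gm X Z) x $ k = (\<Sum>m\<in>UNIV. Y x $ m * pd m (\<lambda>z. nabla gm X Z z $ k) x)
      + (\<Sum>m\<in>UNIV. \<Sum>n\<in>UNIV. christoffel gm x k m n * Y x $ m * nabla gm X Z x $ n)"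
      using nabla_component[OF nabla_C1_on(1)[OF x X Z]] .
    have e3: "nabla gm (lie X Y) Z x $ k = (\<Sum>i\<in>UNIV. lie X Y x $ i * pd i (\<lambda>z. Z z $ k) x)
      + (\<Sum>i\<in>UNIV. \<Sum>j\<in>UNIV. christoffel gm x k i j * lie X Y x $ i * Z x $ j)"
      using nabla_component[OF C1_on_differentiable[OF Z x]] .
    have th: "((\<Sum>m\<in>UNIV. X x $ m * pd m (\<lambda>z. nabla gm Y Z z $ k) x)
      + (\<Sum>m\<in>UNIV. \<Sum>n\<in>UNIV. christoffel gm x k m n * X x $ m * nabla gm Y Z x $ n))
      - ((\<Sum>m\<in>UNIV. Y x $ m * pd m (\<lambda>z. nabla gm X Z z $ k) x)
      + (\<Sum>m\<in>UNIV. \<Sum>n\<in>UNIV. christoffel gm x k m n * Y x $ m * nabla gm X Z x $ n))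
      - ((\<Sum>i\<in>UNIV. lie X Y x $ i * pd i (\<lambda>z. Z z $ k) x)
      + (\<Sum>i\<in>UNIV. \<Sum>j\<in>UNIV. christoffel gm x k i j * lie X Y x $ i * Z x $ j))
      = (\<Sum>m\<in>UNIV. \<Sum>i\<in>UNIV. \<Sum>j\<in>UNIV. X x $ m * Y x $ i * Z x $ j *
       curv_coeff x m i j k)"
      by (rule curvature_coordinate_identity[where X="\<lambda>m. X x $ m" and Y="\<lambda>m. Y x $ m" and Z="\<lambda>m. Z x $ m"
          and dX="\<lambda>m i. pd m (\<lambda>z. X z $ i) x" and dY="\<lambda>m i. pd m (\<lambda>z. Y z $ i) x"
          and dZ="\<lambda>i k. pd i (\<lambda>z. Z z $ k) x" and ddZ="\<lambda>m i k. pd m (pd i (\<lambda>z. Z z $ k)) x"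
          and \<Gamma>="christoffel gm x" and d\<Gamma>="\<lambda>m k i j. pd m (\<lambda>z. christoffel gm z k i j) x"
          and P="\<lambda>m. pd m (\<lambda>z. nabla gm Y Z z $ k) x" and Q="\<lambda>m. pd m (\<lambda>z. nabla gm X Z z $ k) x"
          and NY="\<lambda>n. nabla gm Y Z x $ n" and NX="\<lambda>n. nabla gm X Z x $ n"
          and W="\<lambda>i. lie X Y x $ i" and k=k,
          OF C1_on_pd_commute[OF U_open Zc x] nabla_C1_on(2)[OF x Y Z] nabla_C1_on(2)[OF x X Z]
             nabla_component[OF C1_on_differentiable[OF Z x]] nabla_component[OF C1_on_differentiable[OF Z x]]
             lie_component[OF C1_on_differentiable[OF X x] C1_on_differentiable[OF Y x]]])
    show "curv gm X Y Z x $ k = riemann x (X x) (Y x) (Z x) $ k"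
      unfolding curv_def riemann_def vector_minus_component vec_lambda_beta e1 e2 e3 by (rule th)
  qed
qed

lemma riemann_component: "riemann x u v w $ k = (\<Sum>m\<in>UNIV. \<Sum>i\<in>UNIV. \<Sum>j\<in>UNIV. u $ m * v $ i * w $ j *
       curv_coeff x m i j k)"
  unfolding riemann_def by simp

lemma riemann_linear1: "linear (\<lambda>u. riemann x u v w)"
  and riemann_linear2: "linear (\<lambda>v. riemann x u v w)"
  and riemann_linear3: "linear (riemann x u v)"
  by (rule linearI; simp add: vec_eq_iff riemann_component algebra_simps sum.distrib sum_distrib_left)+

lemma riemann_antisym: "riemann x u v w = - riemann x v u w"
proof (subst vec_eq_iff, intro allI)
  fix k
  have "riemann x v u w $ k = (\<Sum>m\<in>UNIV. \<Sum>i\<in>UNIV. \<Sum>j\<in>UNIV. v $ m * u $ i * w $ j * curv_coeff x m i j k)"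
    by (rule riemann_component)
  also have "\<dots> = (\<Sum>i\<in>UNIV. \<Sum>m\<in>UNIV. \<Sum>j\<in>UNIV. v $ m * u $ i * w $ j * curv_coeff x m i j k)"
    by (rule sum.swap)
  also have "\<dots> = (\<Sum>i\<in>UNIV. \<Sum>m\<in>UNIV. \<Sum>j\<in>UNIV. - (u $ i * v $ m * w $ j * curv_coeff x i m j k))"
    by (intro sum.cong refl) (subst riemann_coeff_antisym, simp)
  also have "\<dots> = - riemann x u v w $ k" unfolding riemann_component by (simp add: sum_negf)
  finally show "riemann x u v w $ k = (- riemann x v u w) $ k" by simp
qed

lemma riemann_bianchi: assumes x: "x \<in> U" shows "riemann x u v w + riemann x v w u + riemann x w u v = 0"
proof (subst vec_eq_iff, intro allI)
  fix k
  have B: "curv_coeff x m i j k + curv_coeff x i j m k + curv_coeff x j m i k = 0" for m i j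
    by (rule riemann_coeff_bianchi) (use christoffel_sym[OF x] pd_christoffel_sym[OF x] in auto)
  have e2: "riemann x v w u $ k = (\<Sum>m\<in>UNIV. \<Sum>i\<in>UNIV. \<Sum>j\<in>UNIV. u $ m * v $ i * w $ j * curv_coeff x i j m k)"
    unfolding riemann_component by (subst sum_rotate3) (simp add: ac_simps)
  have e3: "riemann x w u v $ k = (\<Sum>m\<in>UNIV. \<Sum>i\<in>UNIV. \<Sum>j\<in>UNIV. u $ m * v $ i * w $ j * curv_coeff x j m i k)"
    unfolding riemann_component by (subst (2) sum_rotate3) (simp add: ac_simps)
  have "riemann x u v w $ k + riemann x v w u $ k + riemann x w u v $ k
     = (\<Sum>m\<in>UNIV. \<Sum>i\<in>UNIV. \<Sum>j\<in>UNIV.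
        u $ m * v $ i * w $ j * (curv_coeff x m i j k + curv_coeff x i j m k + curv_coeff x j m i k))"
    unfolding e2 e3 unfolding riemann_component by (simp add: sum.distrib[symmetric] algebra_simps)
  also have "\<dots> = 0" by (simp add: B)
  finally show "(riemann x u v w + riemann x v w u + riemann x w u v) $ k = 0 $ k" by simp
qed

definition metric_at :: "real^3 \<Rightarrow> real^3 \<Rightarrow> real^3 \<Rightarrow> real" where
  "metric_at x p q = p \<bullet> (gm x *v q)"

lemma metric_at_expand: "x \<in> U \<Longrightarrow> metric_at x p q = (\<Sum>l\<in>UNIV. q $ l * (\<Sum>k\<in>UNIV. gm x $ l $ k * p $ k))"
proof -
  assume x: "x \<in> U"
  have "metric_at x p q = (\<Sum>k\<in>UNIV. \<Sum>l\<in>UNIV. q $ l * gm x $ k $ l * p $ k)"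
    unfolding metric_at_def inner_vec_def matrix_vector_mult_def
    by (simp add: sum_distrib_left ac_simps)
  also have "\<dots> = (\<Sum>l\<in>UNIV. \<Sum>k\<in>UNIV. q $ l * gm x $ k $ l * p $ k)" by (rule sum.swap)
  also have "\<dots> = (\<Sum>l\<in>UNIV. q $ l * (\<Sum>k\<in>UNIV. gm x $ l $ k * p $ k))"
    by (simp add: sum_distrib_left ac_simps gm_entry_sym[OF x])
  finally show ?thesis .
qed

lemma lowered_riemann_skew: assumes x: "x \<in> U"
  shows "(\<Sum>k\<in>UNIV. gm x $ l $ k * curv_coeff x m i j k)
   = - (\<Sum>k\<in>UNIV. gm x $ j $ k * curv_coeff x m i l k)"
  by (rule lowered_riemann_coeff_skew[where g="\<lambda>a b. gm x $ a $ b" and \<Gamma>="christoffel gm x"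
      and d\<Gamma>="\<lambda>m k i j. pd m (\<lambda>z. christoffel gm z k i j) x" and L="christoffel1 x"
      and dL="\<lambda>m i j l. pd m (\<lambda>z. christoffel1 z i j l) x" and dg="\<lambda>m a b. pd m (\<lambda>z. gm z $ a $ b) x"
      and h="\<lambda>m a b c. pd m (pd a (\<lambda>z. gm z $ b $ c)) x",
      OF gm_entry_sym[OF x] lower_christoffel[OF x] pd_gm_entry_eq_christoffel1[OF x]
      pd_lower_christoffel[OF x] pd_christoffel1[OF x] C1_on_pd_commute[OF U_open gm_entry_C1_on x]])

lemma metric_at_riemann: assumes x: "x \<in> U"
  shows "metric_at x (riemann x u v w) z
     = (\<Sum>m\<in>UNIV. \<Sum>i\<in>UNIV. \<Sum>j\<in>UNIV. \<Sum>l\<in>UNIV. u $ m * v $ i * w $ j * z $ l *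
     (\<Sum>k\<in>UNIV. gm x $ l $ k * curv_coeff x m i j k))"
proof -
  have "metric_at x (riemann x u v w) z
     = (\<Sum>l\<in>UNIV. \<Sum>k\<in>UNIV. \<Sum>m\<in>UNIV. \<Sum>i\<in>UNIV. \<Sum>j\<in>UNIV.
        z $ l * gm x $ l $ k * (u $ m * v $ i * w $ j * curv_coeff x m i j k))"
    unfolding metric_at_expand[OF x] riemann_component by (simp add: sum_distrib_left mult.assoc)
  also have "\<dots> = (\<Sum>l\<in>UNIV. \<Sum>m\<in>UNIV. \<Sum>i\<in>UNIV. \<Sum>j\<in>UNIV. \<Sum>k\<in>UNIV.
        z $ l * gm x $ l $ k * (u $ m * v $ i * w $ j * curv_coeff x m i j k))"
    by (rule sum.cong[OF refl]) (rule sum_swap_outer3)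
  also have "\<dots> = (\<Sum>m\<in>UNIV. \<Sum>i\<in>UNIV. \<Sum>j\<in>UNIV. \<Sum>l\<in>UNIV. \<Sum>k\<in>UNIV.
        z $ l * gm x $ l $ k * (u $ m * v $ i * w $ j * curv_coeff x m i j k))"
    by (rule sum_swap_outer3)
  also have "\<dots> = (\<Sum>m\<in>UNIV. \<Sum>i\<in>UNIV. \<Sum>j\<in>UNIV. \<Sum>l\<in>UNIV.
        u $ m * v $ i * w $ j * z $ l * (\<Sum>k\<in>UNIV. gm x $ l $ k * curv_coeff x m i j k))"
    by (simp add: sum_distrib_left ac_simps)
  finally show ?thesis .
qed

lemma metric_riemann_skew: assumes x: "x \<in> U"
  shows "metric_at x (riemann x u v w) z = - metric_at x (riemann x u v z) w"
proof -
  let ?L = "\<lambda>m i j l. (\<Sum>k\<in>UNIV. gm x $ l $ k * curv_coeff x m i j k)"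
  have "metric_at x (riemann x u v z) w
     = (\<Sum>m\<in>UNIV. \<Sum>i\<in>UNIV. \<Sum>j\<in>UNIV. \<Sum>l\<in>UNIV. u $ m * v $ i * z $ j * w $ l * ?L m i j l)"
    by (rule metric_at_riemann[OF x])
  also have "\<dots> = (\<Sum>m\<in>UNIV. \<Sum>i\<in>UNIV. \<Sum>l\<in>UNIV. \<Sum>j\<in>UNIV. u $ m * v $ i * z $ j * w $ l * ?L m i j l)"
    by (rule sum.cong[OF refl], rule sum.cong[OF refl], rule sum.swap)
  also have "\<dots> = (\<Sum>m\<in>UNIV. \<Sum>i\<in>UNIV. \<Sum>l\<in>UNIV. \<Sum>j\<in>UNIV. - (u $ m * v $ i * w $ l * z $ j * ?L m i l j))"
    apply (intro sum.cong refl)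
    subgoal for m i l j using lowered_riemann_skew[OF x, of l m i j] by simp
    done
  also have "\<dots> = - metric_at x (riemann x u v w) z"
    unfolding metric_at_riemann[OF x] by (simp add: sum_negf)
  finally show ?thesis by simp
qed

lemma riemann_algebraic_curvature:
  assumes "x \<in> U" shows "algebraic_curvature (gm x) (riemann x)"
  unfolding algebraic_curvature_def
  by (intro conjI allI riemann_linear1 riemann_linear2 riemann_linear3 riemann_antisym
      riemann_bianchi[OF assms] metric_riemann_skew[OF assms, unfolded metric_at_def])

lemma metric_at_sym: "y \<in> U \<Longrightarrow> metric_at y p q = metric_at y q p"
  using metric_at_expand[of y p q] metric_at_expand[of y q p]
  unfolding metric_at_def inner_vec_def matrix_vector_mult_def
  by (simp add: inner_vec_def)

lemma pd_metric_at:
  assumes x: "x \<in> U" and A: "C1_on U A" and B: "C1_on U B"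
  shows "(\<Sum>m\<in>UNIV. v $ m * pd m (\<lambda>z. metric_at z (A z) (B z)) x)
     = metric_at x (nabla gm (cf v) A x) (B x) + metric_at x (A x) (nabla gm (cf v) B x)"
proof -
  have Ac: "C1_on U (\<lambda>z. A z $ i)" for i using C1_on_component[OF U_open A] .
  have Bc: "C1_on U (\<lambda>z. B z $ i)" for i using C1_on_component[OF U_open B] .
  have dA: "(\<lambda>z. A z $ i) differentiable at x" for i using C1_on_differentiable[OF Ac x] .
  have dB: "(\<lambda>z. B z $ i) differentiable at x" for i using C1_on_differentiable[OF Bc x] .
  define F where "F z = (\<Sum>l\<in>UNIV. \<Sum>k\<in>UNIV. B z $ l * gm z $ l $ k * A z $ k)" for z
  have eF: "F z = metric_at z (A z) (B z)" if "z \<in> U" for z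
    unfolding F_def metric_at_expand[OF that] by (simp add: sum_distrib_left mult.assoc)
  have dF: "F differentiable at x" unfolding F_def
    by (intro differentiable_sum ballI differentiable_mult dA dB gm_entry_differentiable[OF x]) simp_all
  have pF: "pd m (\<lambda>z. metric_at z (A z) (B z)) x = pd m F x" for m
    using pd_transform_within_open[OF dF U_open x eF] by simp
  have pF2: "pd m F x = (\<Sum>l\<in>UNIV. \<Sum>k\<in>UNIV. pd m (\<lambda>z. B z $ l) x * gm x $ l $ k * A x $ k
      + B x $ l * pd m (\<lambda>z. gm z $ l $ k) x * A x $ k + B x $ l * gm x $ l $ k * pd m (\<lambda>z. A z $ k) x)" for m
    unfolding F_def by (simp add: pd_sum pd_mult dA dB gm_entry_differentiable[OF x] algebra_simps)
  have dg: "pd m (\<lambda>z. gm z $ a $ b) x = (\<Sum>p\<in>UNIV. gm x $ b $ p * christoffel gm x p m a)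
      + (\<Sum>p\<in>UNIV. gm x $ a $ p * christoffel gm x p m b)" for m a b
    using pd_gm_entry_eq_christoffel1[OF x, of m a b] lower_christoffel[OF x, of b m a]
      lower_christoffel[OF x, of a m b] by simp
  have nA: "nabla gm (cf v) A x $ k = (\<Sum>i\<in>UNIV. v $ i * pd i (\<lambda>z. A z $ k) x)
     + (\<Sum>i\<in>UNIV. \<Sum>j\<in>UNIV. christoffel gm x k i j * v $ i * A x $ j)" for k
    using nabla_component[OF C1_on_differentiable[OF A x], of gm "cf v" k] by (simp add: cf_def)
  have nB: "nabla gm (cf v) B x $ k = (\<Sum>i\<in>UNIV. v $ i * pd i (\<lambda>z. B z $ k) x)
     + (\<Sum>i\<in>UNIV. \<Sum>j\<in>UNIV. christoffel gm x k i j * v $ i * B x $ j)" for k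
    using nabla_component[OF C1_on_differentiable[OF B x], of gm "cf v" k] by (simp add: cf_def)
  have "(\<Sum>m\<in>UNIV. v $ m * pd m (\<lambda>z. metric_at z (A z) (B z)) x)
     = (\<Sum>l\<in>UNIV. B x $ l * (\<Sum>k\<in>UNIV. gm x $ l $ k * nabla gm (cf v) A x $ k))
     + (\<Sum>l\<in>UNIV. A x $ l * (\<Sum>k\<in>UNIV. gm x $ l $ k * nabla gm (cf v) B x $ k))"
    unfolding pF pF2 nA nB
    by (rule metric_compat_identity[where g="\<lambda>a b. gm x $ a $ b" and dg="\<lambda>m a b. pd m (\<lambda>z. gm z $ a $ b) x"
        and \<Gamma>="christoffel gm x", OF gm_entry_sym[OF x] dg])
  also have "\<dots> = metric_at x (nabla gm (cf v) A x) (B x) + metric_at x (nabla gm (cf v) B x) (A x)"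
    unfolding metric_at_expand[OF x] ..
  finally show ?thesis using metric_at_sym[OF x] by simp
qed

lemma nabla_transform_within_open:
  assumes x: "x \<in> U" and d: "W' differentiable at x" and e: "\<And>z. z \<in> U \<Longrightarrow> W z = W' z"
  shows "nabla gm X W x = nabla gm X W' x"
proof -
  have "frechet_derivative W' (at x) = frechet_derivative W (at x)"
    by (rule frechet_derivative_transform_within_open[OF d U_open x]) (simp add: e)
  then show ?thesis unfolding nabla_def using e[OF x] by simp
qed

lemma nabla_scaleR_right:
  assumes d: "W differentiable at x"
  shows "nabla gm X (\<lambda>z. c *\<^sub>R W z) x = c *\<^sub>R nabla gm X W x"
proof -
  have "frechet_derivative (\<lambda>z. c *\<^sub>R W z) (at x) = (\<lambda>h. c *\<^sub>R frechet_derivative W (at x) h)"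
    using frechet_derivative_at[OF has_derivative_scaleR_right[OF has_derivative_frechet_derivative[OF d]]]
    by simp
  then show ?thesis unfolding nabla_def
    by (simp add: vec_eq_iff sum_distrib_left algebra_simps)
qed

lemma nabla_cf_cf_sym:
  assumes x: "x \<in> U"
  shows "nabla gm (cf u) (cf v) x = nabla gm (cf v) (cf u) x"
proof -
  have "(\<Sum>i\<in>UNIV. \<Sum>j\<in>UNIV. christoffel gm x k i j * u $ i * v $ j)
      = (\<Sum>i\<in>UNIV. \<Sum>j\<in>UNIV. christoffel gm x k i j * v $ i * u $ j)" for k
  proof -
    have "(\<Sum>i\<in>UNIV. \<Sum>j\<in>UNIV. christoffel gm x k i j * u $ i * v $ j)
        = (\<Sum>j\<in>UNIV. \<Sum>i\<in>UNIV. christoffel gm x k i j * u $ i * v $ j)" by (rule sum.swap)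
    also have "\<dots> = (\<Sum>j\<in>UNIV. \<Sum>i\<in>UNIV. christoffel gm x k j i * v $ j * u $ i)"
      using christoffel_sym[OF x] by (simp add: ac_simps)
    finally show ?thesis .
  qed
  then show ?thesis unfolding nabla_def cf_def by simp
qed

lemma nabla_lie_cf_cf:
  assumes "W differentiable at x"
  shows "nabla gm (lie (cf u) (cf v)) W x = 0"
  unfolding nabla_def lie_def cf_def using frechet_derivative_eq_sum_pd[OF assms]
  by (simp add: vec_eq_iff)

end

section \<open>Para-Sasakian structures\<close>

locale para_sasakian_chart =
  fixes U :: "(real^3) set" and \<phi> :: "real^3 \<Rightarrow> real^3^3" and \<xi> :: "real^3 \<Rightarrow> real^3"
    and \<eta> :: "real^3 \<Rightarrow> real^3" and gm :: "real^3 \<Rightarrow> real^3^3" and \<epsilon> :: real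
  assumes para_sasakian: "eps_para_sasakian U \<phi> \<xi> \<eta> gm \<epsilon>"
begin

lemma almost_paracontact: "eps_almost_paracontact U \<phi> \<xi> \<eta> gm \<epsilon>"
  using para_sasakian unfolding eps_para_sasakian_def by blast

lemma eps_sq: "\<epsilon> * \<epsilon> = 1"
  using almost_paracontact unfolding eps_almost_paracontact_def by auto

lemma smooth_phi: "smooth3_on U \<phi>" and smooth_xi: "smooth3_on U \<xi>"
  using almost_paracontact unfolding eps_almost_paracontact_def by auto

lemma phi_phi: "y \<in> U \<Longrightarrow> \<phi> y *v (\<phi> y *v v) = v - (\<eta> y \<bullet> v) *\<^sub>R \<xi> y"
  and eta_xi: "y \<in> U \<Longrightarrow> \<eta> y \<bullet> \<xi> y = 1"
  and phi_xi: "y \<in> U \<Longrightarrow> \<phi> y *v \<xi> y = 0"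
  and eta_phi: "y \<in> U \<Longrightarrow> \<eta> y \<bullet> (\<phi> y *v v) = 0"
  and metric_phi_phi: "y \<in> U \<Longrightarrow>
        (\<phi> y *v v) \<bullet> (gm y *v (\<phi> y *v w)) = v \<bullet> (gm y *v w) - \<epsilon> * (\<eta> y \<bullet> v) * (\<eta> y \<bullet> w)"
  using almost_paracontact unfolding eps_almost_paracontact_def by auto

lemma nabla_phi:
  "smooth_vf U X \<Longrightarrow> smooth_vf U Y \<Longrightarrow> y \<in> U \<Longrightarrow>
     nabla gm X (\<lambda>y. \<phi> y *v Y y) y - \<phi> y *v nabla gm X Y y
       = - (ginner gm (\<lambda>y. \<phi> y *v X y) (\<lambda>y. \<phi> y *v Y y) y) *\<^sub>R \<xi> y
         - (\<epsilon> * (\<eta> y \<bullet> Y y)) *\<^sub>R (\<phi> y *v (\<phi> y *v X y))"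
  using para_sasakian unfolding eps_para_sasakian_def by blast

sublocale metric_chart U gm
  using almost_paracontact smooth3_on_imp_C1_on unfolding eps_almost_paracontact_def
  by unfold_locales auto

lemma metric_at_xi: "y \<in> U \<Longrightarrow> metric_at y p (\<xi> y) = \<epsilon> * (\<eta> y \<bullet> p)"
  using metric_phi_phi[of y p "\<xi> y"] phi_xi eta_xi unfolding metric_at_def by simp

lemma C1_on_xi: "C1_on U \<xi>"
  using smooth3_on_imp_C1_on[OF smooth_xi] .

lemma differentiable_phi_mult: "x \<in> U \<Longrightarrow> (\<lambda>z. \<phi> z *v w) differentiable at x"
proof -
  assume x: "x \<in> U"
  have "C1_on U (\<lambda>z. \<phi> z $ k $ j)" for k j
    using C1_on_component[OF U_open C1_on_component[OF U_open smooth3_on_imp_C1_on[OF smooth_phi]]] .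
  then show ?thesis
    unfolding matrix_vector_mult_def
    by (intro differentiable_componentwise)
      (simp, intro differentiable_sum ballI differentiable_mult differentiable_const
        C1_on_differentiable[OF _ x]; simp)
qed

(* Differentiating \<phi> \<xi> = 0 and g(\<xi>,\<xi>) = \<epsilon> along w determines \<nabla>_w \<xi> modulo \<xi> and its \<xi>-part. *)
lemma nabla_cf_xi:
  assumes y: "y \<in> U"
  shows "nabla gm (cf w) \<xi> y = \<epsilon> *\<^sub>R (\<phi> y *v w)"
proof -
  define N where "N = nabla gm (cf w) \<xi> y"
  have "nabla gm (cf w) (\<lambda>z. \<phi> z *v \<xi> z) y = nabla gm (cf w) (\<lambda>z. 0) y"
    by (rule nabla_transform_within_open[OF y]) (auto simp: phi_xi)
  then have "nabla gm (cf w) (\<lambda>z. \<phi> z *v \<xi> z) y = 0"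
    unfolding nabla_def by (simp add: vec_eq_iff)
  then have "\<phi> y *v N = \<epsilon> *\<^sub>R (\<phi> y *v (\<phi> y *v w))"
    using nabla_phi[of "cf w" \<xi> y] smooth3_on_cf smooth_xi y phi_xi[OF y] eta_xi[OF y]
    unfolding N_def smooth_vf_def by (simp add: ginner_def cf_def)
  then have "\<phi> y *v (\<phi> y *v N) = \<epsilon> *\<^sub>R (\<phi> y *v w)"
    using phi_phi[OF y, of "\<phi> y *v w"] eta_phi[OF y] by (simp add: matrix_vector_mult_scaleR)
  then have N: "N = \<epsilon> *\<^sub>R (\<phi> y *v w) + (\<eta> y \<bullet> N) *\<^sub>R \<xi> y"
    using phi_phi[OF y, of N] by (simp add: algebra_simps)
  have "pd m (\<lambda>z. \<epsilon>) y = pd m (\<lambda>z. metric_at z (\<xi> z) (\<xi> z)) y" for m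
    by (rule pd_transform_within_open[OF differentiable_const U_open y]) (simp add: metric_at_xi eta_xi)
  then have "metric_at y N (\<xi> y) + metric_at y (\<xi> y) N = 0"
    using pd_metric_at[OF y C1_on_xi C1_on_xi, of w] unfolding N_def by (simp add: pd_const)
  then have "\<eta> y \<bullet> N = 0"
    using metric_at_sym[OF y, of N "\<xi> y"] metric_at_xi[OF y, of N] eps_sq by auto
  then show ?thesis using N unfolding N_def by simp
qed

lemma nabla_cf_nabla_cf_xi:
  assumes x: "x \<in> U"
  shows "nabla gm (cf u) (nabla gm (cf v) \<xi>) x = \<epsilon> *\<^sub>R nabla gm (cf u) (\<lambda>z. \<phi> z *v v) x"
proof -
  have "nabla gm (cf u) (nabla gm (cf v) \<xi>) x = nabla gm (cf u) (\<lambda>z. \<epsilon> *\<^sub>R (\<phi> z *v v)) x"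
    by (rule nabla_transform_within_open[OF x differentiable_scaleR[OF differentiable_const
          differentiable_phi_mult[OF x]]]) (rule nabla_cf_xi)
  also have "\<dots> = \<epsilon> *\<^sub>R nabla gm (cf u) (\<lambda>z. \<phi> z *v v) x"
    by (rule nabla_scaleR_right[OF differentiable_phi_mult[OF x]])
  finally show ?thesis .
qed

lemma riemann_xi:
  assumes x: "x \<in> U"
  shows "riemann x u v (\<xi> x) = (\<eta> x \<bullet> u) *\<^sub>R v - (\<eta> x \<bullet> v) *\<^sub>R u"
proof -
  have S: "nabla gm (cf u) (\<lambda>y. \<phi> y *v v) x = \<phi> x *v nabla gm (cf u) (cf v) x
        - (ginner gm (\<lambda>y. \<phi> y *v u) (\<lambda>y. \<phi> y *v v) x) *\<^sub>R \<xi> x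
        - (\<epsilon> * (\<eta> x \<bullet> v)) *\<^sub>R (\<phi> x *v (\<phi> x *v u))" for u v
    using nabla_phi[of "cf u" "cf v" x] smooth3_on_cf x unfolding smooth_vf_def cf_def
    by (simp add: algebra_simps)
  have ginner_sym: "ginner gm (\<lambda>y. \<phi> y *v u) (\<lambda>y. \<phi> y *v v) x
      = ginner gm (\<lambda>y. \<phi> y *v v) (\<lambda>y. \<phi> y *v u) x"
    using metric_at_sym[OF x] unfolding ginner_def metric_at_def by simp
  have "riemann x u v (\<xi> x) = curv gm (cf u) (cf v) \<xi> x"
    using curv_eq_riemann[OF x C1_on_cf C1_on_cf C1_on_xi] unfolding cf_def by simp
  also have "\<dots> = \<epsilon> *\<^sub>R (nabla gm (cf u) (\<lambda>z. \<phi> z *v v) x - nabla gm (cf v) (\<lambda>z. \<phi> z *v u) x)"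
    unfolding curv_def nabla_cf_nabla_cf_xi[OF x] nabla_lie_cf_cf[OF C1_on_differentiable[OF C1_on_xi x]]
    by (simp add: algebra_simps)
  also have "\<dots> = (\<epsilon> * \<epsilon>) *\<^sub>R ((\<eta> x \<bullet> u) *\<^sub>R (\<phi> x *v (\<phi> x *v v)) - (\<eta> x \<bullet> v) *\<^sub>R (\<phi> x *v (\<phi> x *v u)))"
    unfolding S nabla_cf_cf_sym[OF x, of u v] ginner_sym by (simp add: algebra_simps)
  also have "\<dots> = (\<eta> x \<bullet> u) *\<^sub>R v - (\<eta> x \<bullet> v) *\<^sub>R u"
    unfolding eps_sq phi_phi[OF x] by (simp add: algebra_simps)
  finally show ?thesis .
qed

end

section \<open>Algebraic curvature tensors in dimension three\<close>

locale paracontact_algebra =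
  fixes G :: "real^3^3" and \<xi> \<eta> :: "real^3" and \<epsilon> :: real
  assumes Gsym: "transpose G = G" and Gdet: "det G \<noteq> 0" and eps: "\<epsilon> * \<epsilon> = 1"
    and etaxi: "\<eta> \<bullet> \<xi> = 1" and gxi: "\<And>p. p \<bullet> (G *v \<xi>) = \<epsilon> * (\<eta> \<bullet> p)"
begin

definition g :: "real^3 \<Rightarrow> real^3 \<Rightarrow> real" where "g p q = p \<bullet> (G *v q)"

lemma g_sym: "g p q = g q p"
proof -
  have "g p q = (p v* G) \<bullet> q" unfolding g_def by (simp add: dot_lmul_matrix)
  also have "\<dots> = (transpose G *v p) \<bullet> q" by simp
  also have "\<dots> = g q p" unfolding g_def Gsym by (simp add: inner_commute)
  finally show ?thesis .
qed

lemma g_add1: "g (p + q) r = g p r + g q r" and g_add2: "g r (p + q) = g r p + g r q"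
  and g_scale1: "g (c *\<^sub>R p) r = c * g p r" and g_scale2: "g r (c *\<^sub>R p) = c * g r p"
  and g_diff1: "g (p - q) r = g p r - g q r" and g_diff2: "g r (p - q) = g r p - g r q"
  and g_zero1: "g 0 r = 0" and g_zero2: "g r 0 = 0"
  unfolding g_def by (simp_all add: inner_add_left inner_diff_left algebra_simps matrix_vector_mult_scaleR)

lemma g_neg1: "g (- p) r = - g p r" and g_neg2: "g r (- p) = - g r p"
  using g_scale1[of "-1" p r] g_scale2[of r "-1" p] by simp_all

lemmas g_lin = g_add1 g_add2 g_scale1 g_scale2 g_diff1 g_diff2 g_zero1 g_zero2

lemma g_xi: "g p \<xi> = \<epsilon> * (\<eta> \<bullet> p)"
  using gxi unfolding g_def by (simp add: inner_commute)

lemma g_xi': "g \<xi> p = \<epsilon> * (\<eta> \<bullet> p)" using g_xi[of p] g_sym[of \<xi> p] by simp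

lemma g_xixi: "g \<xi> \<xi> = \<epsilon>" using g_xi[of \<xi>] etaxi by (simp add: inner_commute)

lemma eps_nz: "\<epsilon> \<noteq> 0" using eps by auto

lemma g_axis: "g (axis a 1) (axis b 1) = G $ a $ b"
proof -
  have "g (axis a 1) (axis b 1) = (G *v axis b 1) $ a"
    unfolding g_def by (simp add: cart_eq_inner_axis inner_commute)
  also have "\<dots> = G $ a $ b" by (simp add: matrix_vector_mult_def axis_def if_distrib cong: if_cong)
  finally show ?thesis .
qed

definition \<pi> :: "real^3 \<Rightarrow> real^3" where "\<pi> p = p - (\<eta> \<bullet> p) *\<^sub>R \<xi>"

lemma g_pi_xi: "g (\<pi> p) \<xi> = 0"
  unfolding \<pi>_def g_lin g_xi g_xixi by (simp add: inner_diff_right etaxi)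

lemma g_split: "g p q = g (\<pi> p) (\<pi> q) + \<epsilon> * (\<eta> \<bullet> p) * (\<eta> \<bullet> q)"
  unfolding \<pi>_def g_lin g_neg1 g_neg2 g_xi g_xi' g_xixi by (simp add: algebra_simps inner_diff_right etaxi)

lemma pi_add: "\<pi> (p + q) = \<pi> p + \<pi> q" unfolding \<pi>_def by (simp add: inner_add_right algebra_simps)

lemma det_sum_rank_one2: "det (\<chi> a b. s * x $ a * x $ b + t * y $ a * y $ b :: real^3^3) = 0"
  unfolding det_3 by (simp add: algebra_simps)

lemma isotropic_additive_orthogonal:
  fixes f :: "real^3 \<Rightarrow> real^3"
  assumes add: "\<And>p q. f (p + q) = f p + f q" and z: "\<And>p. g (f p) (f p) = 0"
  shows "g (f p) (f q) = 0"
proof -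
  have "g (f (p + q)) (f (p + q)) = g (f p) (f p) + 2 * g (f p) (f q) + g (f q) (f q)"
    unfolding add g_lin using g_sym[of "f q" "f p"] by simp
  then show ?thesis using z by simp
qed

(* Otherwise G would be a sum of two rank-one matrices. *)
lemma nonisotropic_horizontal_exists: "\<exists>p. g (\<pi> p) (\<pi> p) \<noteq> 0"
proof (rule ccontr)
  assume "\<not> ?thesis"
  then have z: "g (\<pi> p) (\<pi> p) = 0" for p by simp
  have "G $ a $ b = \<epsilon> * (\<eta> $ a) * (\<eta> $ b)" for a b
    using g_split[of "axis a 1" "axis b 1"]
      isotropic_additive_orthogonal[OF pi_add z, of "axis a 1" "axis b 1"]
    unfolding g_axis by (simp add: cart_eq_inner_axis inner_commute)
  then have "G = (\<chi> a b. \<epsilon> * \<eta> $ a * \<eta> $ b + 0 * \<eta> $ a * \<eta> $ b)" by (simp add: vec_eq_iff)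
  then have "det G = 0" using det_sum_rank_one2[of \<epsilon> \<eta> 0 \<eta>] by (simp only:)
  then show False using Gdet by simp
qed

lemma nonisotropic_complement_exists:
  assumes g1: "g e1 e1 \<noteq> 0" and e1xi: "g e1 \<xi> = 0"
  shows "\<exists>e2. g e2 e2 \<noteq> 0 \<and> g e1 e2 = 0 \<and> g e2 \<xi> = 0"
proof -
  define \<gamma> where "\<gamma> = g e1 e1"
  define f where "f q = \<pi> q - (g (\<pi> q) e1 / \<gamma>) *\<^sub>R e1" for q
  have fe1: "g (f q) e1 = 0" for q unfolding f_def g_lin \<gamma>_def using g1 by simp
  have "\<exists>q. g (f q) (f q) \<noteq> 0"
  proof (rule ccontr)
    assume "\<not> ?thesis"
    then have z: "g (f q) (f q) = 0" for q by simp
    have fadd: "f (p + q) = f p + f q" for p q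
      unfolding f_def pi_add g_lin by (simp add: algebra_simps add_divide_distrib)
    define \<alpha> where "\<alpha> = (\<chi> a. g (\<pi> (axis a 1)) e1 / \<gamma>)"
    have pif: "\<pi> (axis a 1) = f (axis a 1) + (\<alpha> $ a) *\<^sub>R e1" for a unfolding f_def \<alpha>_def by simp
    have "g (\<pi> (axis a 1)) (\<pi> (axis b 1)) = \<gamma> * \<alpha> $ a * \<alpha> $ b" for a b
      unfolding pif g_lin \<gamma>_def
      using isotropic_additive_orthogonal[OF fadd z, of "axis a 1" "axis b 1"]
        fe1[of "axis a 1"] fe1[of "axis b 1"] g_sym[of e1 "f (axis b 1)"]
      by (simp add: algebra_simps)
    then have "G $ a $ b = \<gamma> * \<alpha> $ a * \<alpha> $ b + \<epsilon> * \<eta> $ a * \<eta> $ b" for a b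
      using g_split[of "axis a 1" "axis b 1"] unfolding g_axis
      by (simp add: cart_eq_inner_axis inner_commute)
    then have "G = (\<chi> a b. \<gamma> * \<alpha> $ a * \<alpha> $ b + \<epsilon> * \<eta> $ a * \<eta> $ b)"
      by (simp add: vec_eq_iff)
    then have "det G = 0" using det_sum_rank_one2[of \<gamma> \<alpha> \<epsilon> \<eta>] by (simp only:)
    then show False using Gdet by simp
  qed
  then obtain q where "g (f q) (f q) \<noteq> 0" by blast
  moreover have "g (f q) \<xi> = 0" unfolding f_def g_lin using g_pi_xi e1xi by simp
  ultimately show ?thesis using fe1[of q] g_sym[of e1 "f q"] by auto
qed

definition adapted_frame :: "real^3 \<Rightarrow> real^3 \<Rightarrow> bool" where
  "adapted_frame e1 e2 \<longleftrightarrow>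
     g e1 e1 \<noteq> 0 \<and> g e2 e2 \<noteq> 0 \<and> g e1 e2 = 0 \<and> g e1 \<xi> = 0 \<and> g e2 \<xi> = 0"

lemma adapted_frame_exists: "\<exists>e1 e2. adapted_frame e1 e2"
proof -
  obtain p where "g (\<pi> p) (\<pi> p) \<noteq> 0" using nonisotropic_horizontal_exists by blast
  then show ?thesis
    using nonisotropic_complement_exists[of "\<pi> p"] g_pi_xi unfolding adapted_frame_def by blast
qed

lemma adapted_frameD:
  assumes "adapted_frame e1 e2"
  shows "g e1 e1 \<noteq> 0" "g e2 e2 \<noteq> 0" "g e1 e2 = 0" "g e2 e1 = 0" "g e1 \<xi> = 0" "g \<xi> e1 = 0"
    "g e2 \<xi> = 0" "g \<xi> e2 = 0"
  using assms g_sym unfolding adapted_frame_def by metis+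

lemma gram_matrix:
  fixes M :: "real^3^3"
  shows "M ** G ** transpose M = (\<chi> a b. g (M $ a) (M $ b))"
  unfolding g_def by (simp add: vec_eq_iff matrix_matrix_mult_def transpose_def inner_vec_def
      matrix_vector_mult_def sum_3 algebra_simps)

lemma orthogonal_adapted_frame_eq_0:
  assumes "adapted_frame e1 e2" "g y e1 = 0" "g y e2 = 0" "g y \<xi> = 0"
  shows "y = 0"
proof -
  define M :: "real^3^3" where "M = vector [e1, e2, \<xi>]"
  note o = adapted_frameD[OF assms(1)]
  have "M *v (G *v y) = 0"
    unfolding vec_eq_iff forall_3 M_def using assms(2-4) g_sym[of y]
    by (simp add: matrix_vector_mult_def g_def inner_vec_def)
  then have My: "(M ** G) *v y = 0" by (simp add: matrix_vector_mul_assoc)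
  have "det (M ** G ** transpose M) = g e1 e1 * g e2 e2 * \<epsilon>"
    unfolding gram_matrix det_3 M_def using o g_xixi by simp
  then have "det M * det G * det M \<noteq> 0" using o eps_nz by (simp add: det_mul det_transpose)
  then have dMG: "det (M ** G) \<noteq> 0" by (simp add: det_mul)
  then have "y = (matrix_inv (M ** G) ** (M ** G)) *v y" by (simp add: matrix_inv_mult(2)[OF dMG])
  also have "\<dots> = matrix_inv (M ** G) *v ((M ** G) *v y)" by (simp only: matrix_vector_mul_assoc)
  also have "\<dots> = 0" by (simp only: My matrix_vector_mult_0_right)
  finally show ?thesis .
qed

lemma adapted_frame_expansion:
  assumes "adapted_frame e1 e2"
  shows "y = (g y e1 / g e1 e1) *\<^sub>R e1 + (g y e2 / g e2 e2) *\<^sub>R e2 + (g y \<xi> / \<epsilon>) *\<^sub>R \<xi>"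
proof -
  define r where "r = y - ((g y e1 / g e1 e1) *\<^sub>R e1 + (g y e2 / g e2 e2) *\<^sub>R e2 + (g y \<xi> / \<epsilon>) *\<^sub>R \<xi>)"
  note o = adapted_frameD[OF assms]
  have "g r e1 = 0" "g r e2 = 0" "g r \<xi> = 0"
    unfolding r_def g_lin using o g_xixi eps_nz by simp_all
  then have "r = 0" by (rule orthogonal_adapted_frame_eq_0[OF assms])
  then show ?thesis unfolding r_def by simp
qed

lemma algebraic_curvatureD:
  assumes "algebraic_curvature G R"
  shows algebraic_curvature_add1: "R (p + q) v w = R p v w + R q v w"
    and algebraic_curvature_scale1: "R (c *\<^sub>R p) v w = c *\<^sub>R R p v w"
    and algebraic_curvature_add2: "R u (p + q) w = R u p w + R u q w"
    and algebraic_curvature_scale2: "R u (c *\<^sub>R p) w = c *\<^sub>R R u p w"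
    and algebraic_curvature_add3: "R u v (p + q) = R u v p + R u v q"
    and algebraic_curvature_scale3: "R u v (c *\<^sub>R p) = c *\<^sub>R R u v p"
    and algebraic_curvature_antisym: "R u v w = - R v u w"
    and algebraic_curvature_skew: "g (R u v w) z = - g (R u v z) w"
    and algebraic_curvature_bianchi: "R u v w + R v w u + R w u v = 0"
proof -
  have l: "linear (\<lambda>u. R u v w)" "linear (\<lambda>v. R u v w)" "linear (R u v)" for u v w
    using assms unfolding algebraic_curvature_def by blast+
  show "R (p + q) v w = R p v w + R q v w" "R (c *\<^sub>R p) v w = c *\<^sub>R R p v w"
    "R u (p + q) w = R u p w + R u q w" "R u (c *\<^sub>R p) w = c *\<^sub>R R u p w"
    "R u v (p + q) = R u v p + R u v q" "R u v (c *\<^sub>R p) = c *\<^sub>R R u v p"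
    by (rule linear_add linear_scale, rule l)+
  have "\<forall>u v w. R u v w = - R v u w" "\<forall>u v w z. R u v w \<bullet> (G *v z) = - (R u v z \<bullet> (G *v w))"
    "\<forall>u v w. R u v w + R v w u + R w u v = 0"
    using assms unfolding algebraic_curvature_def by argo+
  then show "R u v w = - R v u w" "g (R u v w) z = - g (R u v z) w" "R u v w + R v w u + R w u v = 0"
    unfolding g_def by blast+
qed
lemma algebraic_curvature_diff:
  assumes R: "algebraic_curvature G R" and S: "algebraic_curvature G S"
  shows "algebraic_curvature G (\<lambda>u v w. R u v w - S u v w)"
  unfolding algebraic_curvature_def
proof (intro conjI allI)
  show "linear (\<lambda>u. R u v w - S u v w)" "linear (\<lambda>v. R u v w - S u v w)"
    "linear (\<lambda>w. R u v w - S u v w)" for u v w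
    by (rule linearI; simp add: algebraic_curvature_add1 algebraic_curvature_add2 algebraic_curvature_add3
        algebraic_curvature_scale1 algebraic_curvature_scale2 algebraic_curvature_scale3 R S algebra_simps)+
  show "R u v w - S u v w = - (R v u w - S v u w)" for u v w
    using algebraic_curvature_antisym[OF R, of u v w] algebraic_curvature_antisym[OF S, of u v w] by simp
  show "(R u v w - S u v w) \<bullet> (G *v z) = - ((R u v z - S u v z) \<bullet> (G *v w))" for u v w z
    using algebraic_curvature_skew[OF R, of u v w z] algebraic_curvature_skew[OF S, of u v w z]
    unfolding g_def by (simp add: inner_diff_left)
  show "R u v w - S u v w + (R v w u - S v w u) + (R w u v - S w u v) = 0" for u v w
  proof -
    have "R u v w - S u v w + (R v w u - S v w u) + (R w u v - S w u v)
        = (R u v w + R v w u + R w u v) - (S u v w + S v w u + S w u v)"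
      by (simp add: algebra_simps)
    also have "\<dots> = 0"
      using algebraic_curvature_bianchi[OF R] algebraic_curvature_bianchi[OF S] by simp
    finally show ?thesis .
  qed
qed
lemma algebraic_curvature_pair_sym:
  assumes "algebraic_curvature G T"
  shows "g (T u v w) z = g (T w z u) v"
proof -
  have anti1: "g (T a b c) d = - g (T b a c) d" for a b c d
    using algebraic_curvature_antisym[OF assms, of a b c] by (simp add: g_neg1)
  have anti2: "g (T a b c) d = - g (T a b d) c" for a b c d
    by (rule algebraic_curvature_skew[OF assms])
  have B: "g (T a b c) d + g (T b c a) d + g (T c a b) d = 0" for a b c d
    using arg_cong[OF algebraic_curvature_bianchi[OF assms, of a b c], of "\<lambda>y. g y d"]
    by (simp add: g_add1 g_zero1)
  show ?thesis
    using anti1[of u v w z] anti2[of u v w z] anti1[of v w u z] anti2[of v w u z]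
      anti1[of w u v z] anti2[of w u v z] anti1[of v w z u] anti2[of v w z u]
      anti1[of w z v u] anti2[of w z v u] anti1[of z v w u] anti2[of z v w u]
      anti1[of w z u v] anti2[of w z u v] anti1[of z u w v] anti2[of z u w v]
      anti1[of u w z v] anti2[of u w z v] anti1[of z u v w] anti2[of z u v w]
      anti1[of u v z w] anti2[of u v z w] anti1[of v z u w] anti2[of v z u w]
      B[of u v w z] B[of v w z u] B[of w z u v] B[of z u v w]
    by linarith
qed

(* In dimension three an algebraic curvature tensor is determined by R(., .)\<xi> together with the
   single sectional number g(R(e1,e2)e2, e1). *)
lemma algebraic_curvature_vanishes:
  assumes frame: "adapted_frame e1 e2" and T: "algebraic_curvature G T"
    and Txi: "\<And>u v. T u v \<xi> = 0" and T12: "g (T e1 e2 e2) e1 = 0"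
  shows "T u v w = 0"
proof -
  note lin = algebraic_curvature_add1[OF T] algebraic_curvature_scale1[OF T]
    algebraic_curvature_add2[OF T] algebraic_curvature_scale2[OF T]
    algebraic_curvature_add3[OF T] algebraic_curvature_scale3[OF T]
  note anti = algebraic_curvature_antisym[OF T] and skew = algebraic_curvature_skew[OF T]
  have dec: "\<exists>a1 a2 a3. y = a1 *\<^sub>R e1 + a2 *\<^sub>R e2 + a3 *\<^sub>R \<xi>" for y
    using adapted_frame_expansion[OF frame, of y] by blast
  have nd: "y = 0" if "g y e1 = 0" "g y e2 = 0" "g y \<xi> = 0" for y
    using orthogonal_adapted_frame_eq_0[OF frame that] .
  have self: "g (T a b c) c = 0" for a b c using skew[of a b c c] by simp
  have Tx1: "T \<xi> b c = 0" for b c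
  proof -
    have "g (T \<xi> b c) z = 0" for z
      using algebraic_curvature_pair_sym[OF T, of \<xi> b c z] Txi[of c z] by (simp add: g_zero1)
    then show ?thesis using nd by blast
  qed
  have Tx2: "T a \<xi> c = 0" for a c using anti[of a \<xi> c] Tx1 by simp
  have T11: "T a a c = 0" for a c
  proof -
    have "(2::real) *\<^sub>R T a a c = T a a c + - T a a c"
      unfolding scaleR_2 by (subst (2) anti) simp
    then show ?thesis by simp
  qed
  have "T e1 e2 e1 = 0"
    by (rule nd) (use self[of e1 e2 e1] skew[of e1 e2 e1 e2] T12 skew[of e1 e2 e1 \<xi>] Txi[of e1 e2]
        in \<open>auto simp: g_zero1\<close>)
  moreover have "T e1 e2 e2 = 0"
    by (rule nd) (use self[of e1 e2 e2] T12 skew[of e1 e2 e2 \<xi>] Txi[of e1 e2] in \<open>auto simp: g_zero1\<close>)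
  ultimately have T12w: "T e1 e2 c = 0" for c
    using dec[of c] Txi[of e1 e2] by (auto simp: lin)
  have "T a b c = 0" if "a \<in> {e1, e2, \<xi>}" "b \<in> {e1, e2, \<xi>}" for a b c
    using that T12w anti[of e2 e1 c] T11 Tx1 Tx2 by auto
  then show ?thesis
    using dec[of u] dec[of v] by (auto simp: lin)
qed

(* With a = r/2 + 2\<epsilon> this is the curvature tensor of a 3-dimensional para-Sasakian manifold. *)
definition model_curv :: "real \<Rightarrow> real^3 \<Rightarrow> real^3 \<Rightarrow> real^3 \<Rightarrow> real^3" where
  "model_curv a u v w = a *\<^sub>R (g v w *\<^sub>R u - g u w *\<^sub>R v)
     - (\<epsilon> + a) *\<^sub>R ((g v w * (\<eta> \<bullet> u) - g u w * (\<eta> \<bullet> v)) *\<^sub>R \<xi>)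
     + (1 + \<epsilon> * a) *\<^sub>R ((\<eta> \<bullet> w) *\<^sub>R ((\<eta> \<bullet> u) *\<^sub>R v - (\<eta> \<bullet> v) *\<^sub>R u))"

lemma eps_eps_mult: "\<epsilon> * (\<epsilon> * x) = x" using eps by (simp add: mult.assoc[symmetric])

lemma algebraic_curvature_model_curv: "algebraic_curvature G (model_curv a)"
  unfolding algebraic_curvature_def
proof (intro conjI allI)
  show "linear (\<lambda>u. model_curv a u v w)" "linear (\<lambda>v. model_curv a u v w)"
    "linear (model_curv a u v)" for u v w
    by (rule linearI; simp add: model_curv_def g_lin algebra_simps inner_add_right)+
  show "model_curv a u v w = - model_curv a v u w" for u v w
    unfolding model_curv_def by (simp add: algebra_simps)
  show "model_curv a u v w \<bullet> (G *v z) = - (model_curv a u v z \<bullet> (G *v w))" for u v w z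
  proof -
    have "g (model_curv a u v w) z = - g (model_curv a u v z) w"
      unfolding model_curv_def g_lin g_xi' by (simp add: algebra_simps eps_eps_mult)
    then show ?thesis unfolding g_def .
  qed
  show "model_curv a u v w + model_curv a v w u + model_curv a w u v = 0" for u v w
    unfolding model_curv_def using g_sym[of w u] g_sym[of u v] g_sym[of v w] by (simp add: algebra_simps)
qed

lemma model_curv_xi: "model_curv a u v \<xi> = (\<eta> \<bullet> u) *\<^sub>R v - (\<eta> \<bullet> v) *\<^sub>R u"
  using etaxi unfolding model_curv_def g_xi by (simp add: algebra_simps inner_commute[of \<xi> \<eta>] eps_eps_mult)

lemma algebraic_curvature_eq_model_curv:
  assumes R: "algebraic_curvature G R"
    and Rxi: "\<And>u v. R u v \<xi> = (\<eta> \<bullet> u) *\<^sub>R v - (\<eta> \<bullet> v) *\<^sub>R u"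
  shows "\<exists>a. R = model_curv a"
proof -
  obtain e1 e2 where frame: "adapted_frame e1 e2" using adapted_frame_exists by blast
  then have g1: "g e1 e1 \<noteq> 0" and g2: "g e2 e2 \<noteq> 0" and o12: "g e1 e2 = 0"
    and n1: "\<eta> \<bullet> e1 = 0" and n2: "\<eta> \<bullet> e2 = 0"
    unfolding adapted_frame_def using eps_nz g_xi by auto
  define a where "a = g (R e1 e2 e2) e1 / (g e1 e1 * g e2 e2)"
  have "g (model_curv a e1 e2 e2) e1 = a * (g e1 e1 * g e2 e2)"
    unfolding model_curv_def g_lin g_xi' using n1 n2 o12 g_sym[of e1 e2] by (simp add: algebra_simps)
  then have "g (R e1 e2 e2 - model_curv a e1 e2 e2) e1 = 0"
    unfolding g_diff1 using g1 g2 by (simp add: a_def)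
  then have "R u v w - model_curv a u v w = 0" for u v w
    using algebraic_curvature_vanishes[OF frame algebraic_curvature_diff[OF R algebraic_curvature_model_curv]]
    by (simp add: Rxi model_curv_xi)
  then have "R = model_curv a" by (intro ext) simp
  then show ?thesis ..
qed

lemma model_curv_trace:
  "(\<Sum>i\<in>UNIV. model_curv a (axis i 1) v w $ i) = (a - \<epsilon>) * g v w - (1 + \<epsilon> * a) * (\<eta> \<bullet> v) * (\<eta> \<bullet> w)"
proof -
  have "(\<Sum>i\<in>UNIV. model_curv a (axis i 1) v w $ i) = 3 * a * g v w - a * g v w
      - (\<epsilon> + a) * (g v w * (\<eta> \<bullet> \<xi>) - g \<xi> w * (\<eta> \<bullet> v))
      + (1 + \<epsilon> * a) * (\<eta> \<bullet> w) * ((\<eta> \<bullet> v) - 3 * (\<eta> \<bullet> v))"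
    unfolding model_curv_def g_def
    by (simp add: sum_3 inner_vec_def matrix_vector_mult_def axis_def algebra_simps)
  also have "\<dots> = (a - \<epsilon>) * g v w - (1 + \<epsilon> * a) * (\<eta> \<bullet> v) * (\<eta> \<bullet> w)"
    unfolding g_xi' etaxi by (simp add: algebra_simps eps_eps_mult)
  finally show ?thesis .
qed

lemma G_xi: "G *v \<xi> = \<epsilon> *\<^sub>R \<eta>"
proof -
  have "axis k 1 \<bullet> (G *v \<xi>) = axis k 1 \<bullet> (\<epsilon> *\<^sub>R \<eta>)" for k
    using gxi[of "axis k 1"] by (simp add: inner_commute)
  then show ?thesis by (simp add: vec_eq_iff cart_eq_inner_axis inner_commute)
qed

lemma matrix_inv_G_eta: "matrix_inv G *v \<eta> = \<epsilon> *\<^sub>R \<xi>"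
proof -
  have "\<xi> = (matrix_inv G ** G) *v \<xi>" using matrix_inv_mult(2)[OF Gdet] by simp
  also have "\<dots> = \<epsilon> *\<^sub>R (matrix_inv G *v \<eta>)"
    by (simp add: matrix_vector_mul_assoc[symmetric] G_xi matrix_vector_mult_scaleR)
  finally have "\<epsilon> *\<^sub>R \<xi> = \<epsilon> *\<^sub>R (\<epsilon> *\<^sub>R (matrix_inv G *v \<eta>))" by simp
  then show ?thesis using eps by simp
qed

definition model_ricci :: "real \<Rightarrow> real^3^3" where
  "model_ricci a = (\<chi> i j. (a - \<epsilon>) * G $ i $ j - (1 + \<epsilon> * a) * \<eta> $ i * \<eta> $ j)"

lemma model_ricci_mult:
  "model_ricci a *v v = (a - \<epsilon>) *\<^sub>R (G *v v) - ((1 + \<epsilon> * a) * (\<eta> \<bullet> v)) *\<^sub>R \<eta>"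
  unfolding model_ricci_def
  by (simp add: vec_eq_iff matrix_vector_mult_def inner_vec_def sum_subtractf
      sum.distrib sum_distrib_left algebra_simps)

lemma model_ricci_op:
  "(matrix_inv G ** model_ricci a) *v v = (a - \<epsilon>) *\<^sub>R v - ((\<epsilon> + a) * (\<eta> \<bullet> v)) *\<^sub>R \<xi>"
proof -
  have "(matrix_inv G ** model_ricci a) *v v
      = (a - \<epsilon>) *\<^sub>R ((matrix_inv G ** G) *v v) - ((1 + \<epsilon> * a) * (\<eta> \<bullet> v)) *\<^sub>R (\<epsilon> *\<^sub>R \<xi>)"
    by (simp add: model_ricci_mult matrix_vector_mul_assoc[symmetric] matrix_vector_mult_diff_distrib
        matrix_vector_mult_scaleR matrix_inv_G_eta)
  also have "\<dots> = (a - \<epsilon>) *\<^sub>R v - ((\<epsilon> + a) * (\<eta> \<bullet> v)) *\<^sub>R \<xi>"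
    using matrix_inv_mult(2)[OF Gdet] by (simp add: algebra_simps eps_eps_mult)
  finally show ?thesis .
qed

lemma model_scal: "trace (matrix_inv G ** model_ricci a) = 2 * a - 4 * \<epsilon>"
proof -
  have "trace (matrix_inv G ** model_ricci a)
      = (\<Sum>i\<in>UNIV. ((matrix_inv G ** model_ricci a) *v axis i 1) $ i)"
    unfolding trace_def by (simp add: matrix_vector_mult_def axis_def if_distrib cong: if_cong)
  also have "\<dots> = (\<Sum>i\<in>UNIV. (a - \<epsilon>) * axis i 1 $ i - (\<epsilon> + a) * (\<eta> $ i) * (\<xi> $ i))"
    unfolding model_ricci_op by (simp add: cart_eq_inner_axis[of \<eta>] inner_commute)
  also have "\<dots> = 3 * (a - \<epsilon>) - (\<epsilon> + a) * (\<eta> \<bullet> \<xi>)"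
    by (simp add: sum_3 inner_vec_def axis_def algebra_simps)
  also have "\<dots> = 2 * a - 4 * \<epsilon>" using etaxi by simp
  finally show ?thesis .
qed

end

section \<open>The T-curvature tensor\<close>

lemma Tcurv_model_identity:
  fixes k e gYZ gXZ gXY nX nY nZ :: real and a :: "nat \<Rightarrow> real" and X Y Z xi :: "real^3"
  assumes e2: "e * e = 1"
  defines "r \<equiv> 2 * k - 4 * e"
  shows "a 0 *\<^sub>R (k *\<^sub>R (gYZ *\<^sub>R X - gXZ *\<^sub>R Y) - (e + k) *\<^sub>R ((gYZ * nX - gXZ * nY) *\<^sub>R xi)
          + (1 + e * k) *\<^sub>R (nZ *\<^sub>R (nX *\<^sub>R Y - nY *\<^sub>R X)))
    + (a 1 * ((k - e) * gYZ - (1 + e * k) * nY * nZ)) *\<^sub>R X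
    + (a 2 * ((k - e) * gXZ - (1 + e * k) * nX * nZ)) *\<^sub>R Y
    + (a 3 * ((k - e) * gXY - (1 + e * k) * nX * nY)) *\<^sub>R Z
    + (a 4 * gYZ) *\<^sub>R ((k - e) *\<^sub>R X - ((e + k) * nX) *\<^sub>R xi)
    + (a 5 * gXZ) *\<^sub>R ((k - e) *\<^sub>R Y - ((e + k) * nY) *\<^sub>R xi)
    + (a 6 * gXY) *\<^sub>R ((k - e) *\<^sub>R Z - ((e + k) * nZ) *\<^sub>R xi)
    + (a 7 * r) *\<^sub>R (gYZ *\<^sub>R X - gXZ *\<^sub>R Y)
  =     (((r / 2 + e) * (a 0 + a 1 + a 4) + a 7 * r + e * a 0) * gYZ) *\<^sub>R X
      - (((r / 2 + e) * (a 0 - a 2 - a 5) + a 7 * r + e * a 0) * gXZ) *\<^sub>R Y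
      + ((r / 2 + e) * (a 3 + a 6) * gXY) *\<^sub>R Z
      - ((e * r / 2 + 3) * a 3 * nX * nY) *\<^sub>R Z
      - ((e * r / 2 + 3) * (a 0 + a 1) * nY * nZ) *\<^sub>R X
      + ((e * r / 2 + 3) * (a 0 - a 2) * nX * nZ) *\<^sub>R Y
      + ((r / 2 + 3 * e) * (a 0 - a 5) * gXZ * nY) *\<^sub>R xi
      - ((r / 2 + 3 * e) * a 6 * gXY * nZ) *\<^sub>R xi
      - ((r / 2 + 3 * e) * (a 0 + a 4) * gYZ * nX) *\<^sub>R xi"
proof -
  have "e * r = 2 * (e * k) - 4" using e2 unfolding r_def by (simp add: algebra_simps)
  then have c1: "e * r / 2 + 3 = 1 + e * k" by linarith
  have c2: "r / 2 + e = k - e" and c3: "r / 2 + 3 * e = e + k"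
    unfolding r_def by (simp_all add: diff_divide_distrib)
  show ?thesis unfolding c1 c2 c3 by (simp add: algebra_simps)
qed

context para_sasakian_chart
begin

lemma paracontact_algebra_at: "x \<in> U \<Longrightarrow> paracontact_algebra (gm x) (\<xi> x) (\<eta> x) \<epsilon>"
  using gm_sym gm_det eps_sq eta_xi metric_at_xi
  by unfold_locales (auto simp: metric_at_def)

lemma curvature_model_form:
  assumes x: "x \<in> U"
  obtains k where
    "\<And>X Y Z. C1_on U X \<Longrightarrow> C1_on U Y \<Longrightarrow> C1_on U Z \<Longrightarrow> curv gm X Y Z x =
        k *\<^sub>R (ginner gm Y Z x *\<^sub>R X x - ginner gm X Z x *\<^sub>R Y x)
      - (\<epsilon> + k) *\<^sub>R ((ginner gm Y Z x * (\<eta> x \<bullet> X x) - ginner gm X Z x * (\<eta> x \<bullet> Y x)) *\<^sub>R \<xi> x)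
      + (1 + \<epsilon> * k) *\<^sub>R ((\<eta> x \<bullet> Z x) *\<^sub>R ((\<eta> x \<bullet> X x) *\<^sub>R Y x - (\<eta> x \<bullet> Y x) *\<^sub>R X x))"
    and "\<And>Y Z. C1_on U Y \<Longrightarrow> C1_on U Z \<Longrightarrow>
        ricci gm Y Z x = (k - \<epsilon>) * ginner gm Y Z x - (1 + \<epsilon> * k) * (\<eta> x \<bullet> Y x) * (\<eta> x \<bullet> Z x)"
    and "\<And>X. ricci_op gm X x = (k - \<epsilon>) *\<^sub>R X x - ((\<epsilon> + k) * (\<eta> x \<bullet> X x)) *\<^sub>R \<xi> x"
    and "scal gm x = 2 * k - 4 * \<epsilon>"
proof -
  interpret A: paracontact_algebra "gm x" "\<xi> x" "\<eta> x" \<epsilon>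
    by (rule paracontact_algebra_at[OF x])
  have gin: "ginner gm V W x = A.g (V x) (W x)" for V W unfolding ginner_def A.g_def ..
  obtain k where Rk: "riemann x = A.model_curv k"
    using A.algebraic_curvature_eq_model_curv riemann_algebraic_curvature[OF x] riemann_xi[OF x] by blast
  have curv: "curv gm V W Z x = A.model_curv k (V x) (W x) (Z x)"
    if "C1_on U V" "C1_on U W" "C1_on U Z" for V W Z
    using curv_eq_riemann[OF x that] Rk by simp
  have ric: "ricci gm V W x = (k - \<epsilon>) * A.g (V x) (W x) - (1 + \<epsilon> * k) * (\<eta> x \<bullet> V x) * (\<eta> x \<bullet> W x)"
    if "C1_on U V" "C1_on U W" for V W
    unfolding ricci_def using curv[OF C1_on_cf that] A.model_curv_trace by (simp add: cf_def)
  have rmat: "ricci_mat gm x = A.model_ricci k"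
    unfolding ricci_mat_def A.model_ricci_def using ric[OF C1_on_cf C1_on_cf] A.g_axis
    by (simp add: cf_def vec_eq_iff cart_eq_inner_axis inner_commute)
  show ?thesis
    by (rule that) (simp_all add: curv ric gin A.model_curv_def ricci_op_def scal_def rmat
        A.model_ricci_op A.model_scal)
qed

end

theorem mainTheorem4:
  fixes U :: "(real^3) set" and \<phi> :: "real^3 \<Rightarrow> real^3^3" and \<xi> :: "real^3 \<Rightarrow> real^3"
    and \<eta> :: "real^3 \<Rightarrow> real^3" and gm :: "real^3 \<Rightarrow> real^3^3" and \<epsilon> :: real
    and a :: "nat \<Rightarrow> real"
  assumes "eps_para_sasakian U \<phi> \<xi> \<eta> gm \<epsilon>"
  shows "\<forall>X Y Z. smooth_vf U X \<longrightarrow> smooth_vf U Y \<longrightarrow> smooth_vf U Z \<longrightarrow> (\<forall>x\<in>U.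
    Tcurv gm a X Y Z x =
        (((scal gm x / 2 + \<epsilon>) * (a 0 + a 1 + a 4) + a 7 * scal gm x + \<epsilon> * a 0) * ginner gm Y Z x) *\<^sub>R X x
      - (((scal gm x / 2 + \<epsilon>) * (a 0 - a 2 - a 5) + a 7 * scal gm x + \<epsilon> * a 0) * ginner gm X Z x) *\<^sub>R Y x
      + ((scal gm x / 2 + \<epsilon>) * (a 3 + a 6) * ginner gm X Y x) *\<^sub>R Z x
      - ((\<epsilon> * scal gm x / 2 + 3) * a 3 * (\<eta> x \<bullet> X x) * (\<eta> x \<bullet> Y x)) *\<^sub>R Z x
      - ((\<epsilon> * scal gm x / 2 + 3) * (a 0 + a 1) * (\<eta> x \<bullet> Y x) * (\<eta> x \<bullet> Z x)) *\<^sub>R X x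
      + ((\<epsilon> * scal gm x / 2 + 3) * (a 0 - a 2) * (\<eta> x \<bullet> X x) * (\<eta> x \<bullet> Z x)) *\<^sub>R Y x
      + ((scal gm x / 2 + 3 * \<epsilon>) * (a 0 - a 5) * ginner gm X Z x * (\<eta> x \<bullet> Y x)) *\<^sub>R \<xi> x
      - ((scal gm x / 2 + 3 * \<epsilon>) * a 6 * ginner gm X Y x * (\<eta> x \<bullet> Z x)) *\<^sub>R \<xi> x
      - ((scal gm x / 2 + 3 * \<epsilon>) * (a 0 + a 4) * ginner gm Y Z x * (\<eta> x \<bullet> X x)) *\<^sub>R \<xi> x)"
proof (intro allI impI ballI, goal_cases)
  case (1 X Y Z x)
  then have x: "x \<in> U" and C1: "C1_on U X" "C1_on U Y" "C1_on U Z"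
    using smooth3_on_imp_C1_on unfolding smooth_vf_def by auto
  interpret para_sasakian_chart U \<phi> \<xi> \<eta> gm \<epsilon> by unfold_locales fact
  show ?case
  proof (rule curvature_model_form[OF x], goal_cases)
    case (1 k)
    show ?case
      using 1(1)[OF C1] 1(2)[OF C1(2,3)] 1(2)[OF C1(1,3)] 1(2)[OF C1(1,2)] 1(3) 1(4)
      unfolding Tcurv_def by (simp only:) (rule Tcurv_model_identity[OF eps_sq])
  qed
qed

end
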